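(* Let $C$ be a connected $n$-dimensional unoriented resolution configuration which is neither a tree nor a dual tree. Then any associated map $F_C:V_0(C)\to V_1(C)$ of bidegree $(n,p)$ with $p\geq 2n$ satisfying the filtration rule, the duality rule and the naturality rule must be equal to zero.
   Context: An $n$-dimensional resolution configuration $C$ is a finite set of pairwise disjoint embedded circles in $S^2$ (the starting circles) together with $n$ pairwise disjoint embedded arcs whose endpoints lie on the circles and whose interiors are disjoint from the circles; unoriented means the arcs carry no orientation. The ending circles are obtained by surgery along all arcs. The dual configuration $C^*$ consists of the ending circles with dual arcs obtained by rotating each arc $90$ degrees counterclockwise; the mirror $m(C)$ is the reflection of $C$ in $\mathbb{R}\times\{0\}\subset\mathbb{R}^2\cup\{\infty\}=S^2$. $C$ is connected if the graph with vertices the circles and edges the arcs is connected. A connected $n$-dimensional configuration is a tree if it has exactly $n+1$ starting circles and one ending circle; a dual tree is the dual of a tree. $V_0(C)=\bigotimes_i\mathbb{F}_2[x_i]/(x_i^2)$ over starting circles $x_i$, $V_1(C)=\bigotimes_j\mathbb{F}_2[y_j]/(y_j^2)$ over ending circles $y_j$, with bases of monomials. Quantum grading: in each factor $\mathrm{gr}_q(1)=1$, $\mathrm{gr}_q(z)=-1$, summed over factors, and for an $n$-dimensional configuration monomials of $V_1(C)$ get an extra shift of $+n$. A linear map $F_C$ has bidegree $(n,p)$ if it sends each monomial to a combination of monomials with quantum grading larger by $p$. Rules: (Naturality) if an orientation-preserving diffeomorphism of $S^2$ sends $C$ to $C'$, then $F_C=F_{C'}$ under the induced identifications. (Duality) with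 canonical identifications $V_0(m(C^* ))=V_1(C)$, $V_1(m(C^* ))=V_0(C)$, and $a\mapsto a^*$ the map on monomials induced by $1^*=z$, $z^*=1$ in each factor, the coefficient of $b$ in $F_C(a)$ equals the coefficient of $a^*$ in $F_{m(C^* )}(b^* )$ for all monomials $a\in V_0(C)$, $b\in V_1(C)$. (Filtration) for a point $P$ on the starting circles, with $x(P)$, $y(P)$ the starting and ending circles containing $P$: if monomial $a$ is divisible by $x(P)$ and the coefficient of monomial $b$ in $F_C(a)$ is non-zero, then $y(P)$ divides $b$. *)

theory Defs
  imports Main "HOL-Library.Z2"
begin

text \<open>
Combinatorial model of a connected unoriented resolution configuration in S^2.  The graph formed by the starting circles and the arcs is a
connected graph embedded in the oriented sphere; its vertices are the arc
endpoints (each of valence 3: one arc half-edge, two circle half-edges).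
Up to orientation preserving diffeomorphism of S^2 such an embedded graph is
the same as a genus 0 combinatorial map (rotation system):
  darts : half-edges,
  alph  : fixed-point free involution pairing the two halves of an edge,
  sig   : counterclockwise successor of a dart around its vertex,
  arcs  : the darts that are halves of arcs.
\<close>

record 'd rconf =
  darts :: "'d set"
  alph  :: "'d \<Rightarrow> 'd"
  sig   :: "'d \<Rightarrow> 'd"
  arcs  :: "'d set"

definition orbit :: "('d \<Rightarrow> 'd) \<Rightarrow> 'd \<Rightarrow> 'd set" where
  "orbit f d = {(f ^^ k) d | k. True}"

definition conn_config :: "'d rconf \<Rightarrow> bool" where
  "conn_config C \<longleftrightarrow>
     finite (darts C) \<and> darts C \<noteq> {} \<and>
     (\<forall>d\<in>darts C. alph C d \<in> darts C \<and> alph C d \<noteq> d \<and> alph C (alph C d) = d) \<and>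
     bij_betw (sig C) (darts C) (darts C) \<and>
     (\<forall>d\<in>darts C. sig C d \<noteq> d \<and> sig C (sig C (sig C d)) = d) \<and>
     arcs C \<subseteq> darts C \<and>
     (\<forall>d\<in>arcs C. alph C d \<in> arcs C) \<and>
     (\<forall>d\<in>darts C. card ({d, sig C d, sig C (sig C d)} \<inter> arcs C) = 1) \<and>
     \<comment> \<open>connected\<close>
     (\<forall>d\<in>darts C. \<forall>e\<in>darts C.
        (d, e) \<in> ({(x, alph C x) | x. x \<in> darts C} \<union> {(x, sig C x) | x. x \<in> darts C})\<^sup>*) \<and>
     \<comment> \<open>planar (genus 0): V - E + F = 2\<close>
     int (card {orbit (sig C) d | d. d \<in> darts C})
       - int (card {{d, alph C d} | d. d \<in> darts C})
       + int (card {orbit (sig C \<circ> alph C) d | d. d \<in> darts C}) = 2"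

definition dim :: "'d rconf \<Rightarrow> nat" where
  "dim C = card {{d, alph C d} | d. d \<in> arcs C}"

text \<open>Circle darts: the other circle dart at the same vertex (circle continues).\<close>
definition other :: "'d rconf \<Rightarrow> 'd \<Rightarrow> 'd" where
  "other C d = (if sig C d \<in> arcs C then sig C (sig C d) else sig C d)"

text \<open>After surgery along the arc at the vertex of d, the curve leaving the
  vertex through d continues along the side of the band into the circle dart
  at the other endpoint of the arc.\<close>
definition surg :: "'d rconf \<Rightarrow> 'd \<Rightarrow> 'd" where
  "surg C d = (if sig C (sig C d) \<in> arcs C
                then sig C (sig C (alph C (sig C (sig C d))))
                else sig C (alph C (sig C d)))"

definition circ_darts :: "'d rconf \<Rightarrow> 'd set" where
  "circ_darts C = darts C - arcs C"

text \<open>Starting circles, represented as the sets of circle darts lying on them.\<close>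
definition start_circ :: "'d rconf \<Rightarrow> 'd \<Rightarrow> 'd set" where
  "start_circ C d = {e. (d, e) \<in> ({(x, alph C x) | x. x \<in> circ_darts C}
                                 \<union> {(x, other C x) | x. x \<in> circ_darts C})\<^sup>*}"

definition end_circ :: "'d rconf \<Rightarrow> 'd \<Rightarrow> 'd set" where
  "end_circ C d = {e. (d, e) \<in> ({(x, alph C x) | x. x \<in> circ_darts C}
                               \<union> {(x, surg C x) | x. x \<in> circ_darts C})\<^sup>*}"

definition starts :: "'d rconf \<Rightarrow> 'd set set" where
  "starts C = start_circ C ` circ_darts C"

definition ends :: "'d rconf \<Rightarrow> 'd set set" where
  "ends C = end_circ C ` circ_darts C"

definition is_tree :: "'d rconf \<Rightarrow> bool" where
  "is_tree C \<longleftrightarrow> conn_config C \<and> card (starts C) = dim C + 1 \<and> card (ends C) = 1"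

text \<open>Dual configuration C^*: same darts; the dual arc of an arc crosses its
  band; circle darts of C^* are identified with those of C (each circle edge of C
  becomes a circle edge of C^*), the dual arc dart lying on the side of the band
  adjacent to sig a is identified with a.  Then the starting (ending) circles of
  C^* are literally the ending (starting) circles of C.\<close>
definition dual :: "'d rconf \<Rightarrow> 'd rconf" where
  "dual C = C\<lparr> sig := (\<lambda>d. if d \<in> arcs C then sig C (sig C (alph C d))
                          else if sig C (sig C d) \<in> arcs C then sig C (sig C d)
                          else sig C (alph C (sig C d))) \<rparr>"

text \<open>Mirror image: reflection reverses the cyclic orders at vertices.\<close>
definition mirror :: "'d rconf \<Rightarrow> 'd rconf" where
  "mirror C = C\<lparr> sig := (\<lambda>d. sig C (sig C d)) \<rparr>"

text \<open>Isomorphism = orientation preserving diffeomorphism of S^2 carrying one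
  configuration to the other.\<close>
definition conf_iso :: "('d \<Rightarrow> 'd) \<Rightarrow> 'd rconf \<Rightarrow> 'd rconf \<Rightarrow> bool" where
  "conf_iso \<phi> C C' \<longleftrightarrow> bij_betw \<phi> (darts C) (darts C') \<and>
     (\<forall>d\<in>darts C. \<phi> (alph C d) = alph C' (\<phi> d) \<and> \<phi> (sig C d) = sig C' (\<phi> d)
                   \<and> (d \<in> arcs C \<longleftrightarrow> \<phi> d \<in> arcs C'))"

definition is_dual_tree :: "'d rconf \<Rightarrow> bool" where
  "is_dual_tree C \<longleftrightarrow> (\<exists>T \<phi>. is_tree T \<and> conf_iso \<phi> (dual T) C)"

text \<open>A map F_C : V_0(C) \<rightarrow> V_1(C) over F_2 is given by its matrix in the monomial
  bases; monomials are identified with sets of circles.  F C a b is the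
  coefficient of monomial b in F_C(a).\<close>
type_synonym 'd family = "'d rconf \<Rightarrow> 'd set set \<Rightarrow> 'd set set \<Rightarrow> bit"

definition gr0 :: "'d rconf \<Rightarrow> 'd set set \<Rightarrow> int" where
  "gr0 C a = int (card (starts C)) - 2 * int (card a)"

definition gr1 :: "'d rconf \<Rightarrow> 'd set set \<Rightarrow> int" where
  "gr1 C b = int (card (ends C)) - 2 * int (card b) + int (dim C)"

definition has_bidegree :: "'d family \<Rightarrow> 'd rconf \<Rightarrow> int \<Rightarrow> bool" where
  "has_bidegree F C p \<longleftrightarrow> (\<forall>a b. a \<subseteq> starts C \<longrightarrow> b \<subseteq> ends C \<longrightarrow>
      F C a b \<noteq> 0 \<longrightarrow> gr1 C b = gr0 C a + p)"

definition naturality_rule :: "'d family \<Rightarrow> bool" where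
  "naturality_rule F \<longleftrightarrow> (\<forall>C C' \<phi>. conn_config C \<longrightarrow> conn_config C' \<longrightarrow> conf_iso \<phi> C C' \<longrightarrow>
     (\<forall>a b. a \<subseteq> starts C \<longrightarrow> b \<subseteq> ends C \<longrightarrow>
        F C a b = F C' ((\<lambda>S. \<phi> ` S) ` a) ((\<lambda>S. \<phi> ` S) ` b)))"

definition duality_rule :: "'d family \<Rightarrow> bool" where
  "duality_rule F \<longleftrightarrow> (\<forall>C. conn_config C \<longrightarrow>
     (\<forall>a b. a \<subseteq> starts C \<longrightarrow> b \<subseteq> ends C \<longrightarrow>
        F C a b = F (mirror (dual C)) (ends C - b) (starts C - a)))"

text \<open>Points P on starting circles away from the arc feet lie on circle edges,
  i.e. are given by a circle dart d; then x(P) = start_circ C d, y(P) = end_circ C d.\<close>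
definition filtration_rule :: "'d family \<Rightarrow> bool" where
  "filtration_rule F \<longleftrightarrow> (\<forall>C. conn_config C \<longrightarrow> (\<forall>d\<in>circ_darts C.
     \<forall>a b. a \<subseteq> starts C \<longrightarrow> b \<subseteq> ends C \<longrightarrow>
        start_circ C d \<in> a \<longrightarrow> F C a b \<noteq> 0 \<longrightarrow> end_circ C d \<in> b))"

end

theory Submission
  imports Defs
begin

text \<open>
  Surger the arcs of a connected configuration one at a time.  The number of circles minus
  twice the number of components of the graph formed by the starting circles and the arcs
  surgered so far grows by at most one per arc: an arc with both feet on one circle changes
  the number of circles by at most one and merges no components, while an arc joining two
  circles merges them and at most two components.  It starts at \<open>-|S|\<close> and ends at
  \<open>|E| - 2\<close>, so \<open>|S| + |E| \<le> n + 2\<close> for the sets \<open>S\<close>, \<open>E\<close> of starting and ending circles.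

  Let the coefficient of the monomial \<open>b\<close> in \<open>F_C(a)\<close> be non-zero.  Since \<open>p \<ge> 2n\<close>,
  \<open>|E| - 2|b| \<ge> |S| - 2|a| + n\<close>.  If \<open>a = 1\<close>, this forces \<open>|S| = 1\<close> and \<open>|E| = n + 1\<close>:
  the dual \<open>C\<^sup>*\<close> is a tree, and \<open>C\<close>, being isomorphic to \<open>C\<^sup>*\<^sup>*\<close>, is a dual tree.  Otherwise
  the filtration rule gives \<open>b \<noteq> 1\<close>, which forces \<open>a\<close> to be the product of all starting
  circles, \<open>|b| = 1\<close> and \<open>|S| + |E| = n + 2\<close>; by the filtration rule again every ending
  circle divides \<open>b\<close>, so \<open>|E| = 1\<close> and \<open>C\<close> is a tree.
\<close>

section \<open>Components of symmetric relations\<close>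

definition num_components :: "'a set \<Rightarrow> ('a \<times> 'a) set \<Rightarrow> nat" where
  "num_components S Q = card ((\<lambda>x. {y. (x, y) \<in> Q\<^sup>*}) ` S)"

lemma num_components_cong: "Q\<^sup>* = Q'\<^sup>* \<Longrightarrow> num_components S Q = num_components S Q'"
  unfolding num_components_def by simp

lemma rtrancl_sym: "sym Q \<Longrightarrow> (x, y) \<in> Q\<^sup>* \<Longrightarrow> (y, x) \<in> Q\<^sup>*"
  using sym_rtrancl by (metis symD)

lemma sym_edge: "sym {(u, v), (v, u)}"
  unfolding sym_def by auto

lemma sym_involution_graph:
  assumes "\<And>x. x \<in> S \<Longrightarrow> f x \<in> S \<and> f (f x) = x"
  shows "sym {(x, f x) | x. x \<in> S}"
proof (rule symI)
  fix x y
  assume "(x, y) \<in> {(x, f x) | x. x \<in> S}"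
  then have "y \<in> S" "x = f y"
    using assms by auto
  then show "(y, x) \<in> {(x, f x) | x. x \<in> S}"
    by blast
qed

lemma rtrancl_Un_subset_rtrancl: "F \<subseteq> Q\<^sup>* \<Longrightarrow> (Q \<union> F)\<^sup>* = Q\<^sup>*"
  by (rule rtrancl_subset) auto

lemma rtrancl_Un_connected_edge:
  assumes "sym Q" "(u, v) \<in> Q\<^sup>*"
  shows "(Q \<union> {(u, v), (v, u)})\<^sup>* = Q\<^sup>*"
  by (rule rtrancl_subset) (use assms rtrancl_sym in auto)

lemma rtrancl_Un_edge_iff:
  assumes "sym Q"
  shows "(x, y) \<in> (Q \<union> {(u, v), (v, u)})\<^sup>* \<longleftrightarrow>
    (x, y) \<in> Q\<^sup>* \<or> (x, u) \<in> Q\<^sup>* \<and> (v, y) \<in> Q\<^sup>* \<or> (x, v) \<in> Q\<^sup>* \<and> (u, y) \<in> Q\<^sup>*"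
proof
  have sym_rt: "sym (Q\<^sup>*)"
    using assms sym_rtrancl by blast
  assume "(x, y) \<in> (Q \<union> {(u, v), (v, u)})\<^sup>*"
  then show "(x, y) \<in> Q\<^sup>* \<or> (x, u) \<in> Q\<^sup>* \<and> (v, y) \<in> Q\<^sup>* \<or> (x, v) \<in> Q\<^sup>* \<and> (u, y) \<in> Q\<^sup>*"
  proof (induction rule: rtrancl_induct)
    case (step y z)
    from step.hyps(2) consider "(y, z) \<in> Q" | "y = u" "z = v" | "y = v" "z = u"
      by blast
    then show ?case
    proof cases
      case 1
      then show ?thesis using step.IH by (meson rtrancl.rtrancl_into_rtrancl)
    next
      case 2
      then show ?thesis using step.IH sym_rt by (meson rtrancl.rtrancl_refl rtrancl_trans symD)
    next
      case 3
      then show ?thesis using step.IH sym_rt by (meson rtrancl.rtrancl_refl rtrancl_trans symD)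
    qed
  qed simp
next
  have sub: "Q\<^sup>* \<subseteq> (Q \<union> {(u, v), (v, u)})\<^sup>*"
    by (rule rtrancl_mono) auto
  have uv: "(u, v) \<in> (Q \<union> {(u, v), (v, u)})\<^sup>*" "(v, u) \<in> (Q \<union> {(u, v), (v, u)})\<^sup>*"
    by auto
  assume "(x, y) \<in> Q\<^sup>* \<or> (x, u) \<in> Q\<^sup>* \<and> (v, y) \<in> Q\<^sup>* \<or> (x, v) \<in> Q\<^sup>* \<and> (u, y) \<in> Q\<^sup>*"
  then show "(x, y) \<in> (Q \<union> {(u, v), (v, u)})\<^sup>*"
    using sub uv by (elim disjE conjE) (meson rtrancl_trans subsetD)+
qed

lemma rtrancl_Un_edge_class:
  assumes "sym Q"
  shows "{y. (x, y) \<in> (Q \<union> {(u, v), (v, u)})\<^sup>*} = (if (x, u) \<in> Q\<^sup>* \<or> (x, v) \<in> Q\<^sup>*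
    then {y. (u, y) \<in> Q\<^sup>*} \<union> {y. (v, y) \<in> Q\<^sup>*} else {y. (x, y) \<in> Q\<^sup>*})"
proof -
  have same_class: "{y. (x, y) \<in> Q\<^sup>*} = {y. (z, y) \<in> Q\<^sup>*}" if "(x, z) \<in> Q\<^sup>*" for z
    using that rtrancl_sym[OF assms] by (blast intro: rtrancl_trans)
  have "{y. (x, y) \<in> (Q \<union> {(u, v), (v, u)})\<^sup>*} = {y. (x, y) \<in> Q\<^sup>*}
      \<union> (if (x, u) \<in> Q\<^sup>* then {y. (v, y) \<in> Q\<^sup>*} else {})
      \<union> (if (x, v) \<in> Q\<^sup>* then {y. (u, y) \<in> Q\<^sup>*} else {})"
    unfolding rtrancl_Un_edge_iff[OF assms] by auto
  then show ?thesis
    using same_class[of u] same_class[of v] by auto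
qed

lemma num_components_Un_edge:
  assumes fin: "finite S" and sym: "sym Q" and uv: "u \<in> S" "v \<in> S"
  shows "num_components S (Q \<union> {(u, v), (v, u)}) + (if (u, v) \<in> Q\<^sup>* then 0 else 1)
    = num_components S Q"
proof (cases "(u, v) \<in> Q\<^sup>*")
  case True
  then have "(Q \<union> {(u, v), (v, u)})\<^sup>* = Q\<^sup>*"
    by (rule rtrancl_Un_connected_edge[OF sym])
  then show ?thesis
    using True num_components_cong by simp
next
  case False
  define cls where "cls x = {y. (x, y) \<in> Q\<^sup>*}" for x
  define U where "U = cls u \<union> cls v"
  have cls_eq: "(x, y) \<in> Q\<^sup>* \<Longrightarrow> cls x = cls y" for x y
    unfolding cls_def using rtrancl_sym[OF sym] by (blast intro: rtrancl_trans)
  have in_U: "x \<in> U \<longleftrightarrow> (x, u) \<in> Q\<^sup>* \<or> (x, v) \<in> Q\<^sup>*" for x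
    unfolding U_def cls_def using rtrancl_sym[OF sym] by blast
  have self: "x \<in> cls x" for x
    unfolding cls_def by simp
  have new_cls: "{y. (x, y) \<in> (Q \<union> {(u, v), (v, u)})\<^sup>*} = (if x \<in> U then U else cls x)" for x
    unfolding rtrancl_Un_edge_class[OF sym] in_U by (simp add: U_def cls_def)
  have uv_U: "u \<in> U" "v \<in> U"
    using self U_def by blast+
  have new: "(\<lambda>x. {y. (x, y) \<in> (Q \<union> {(u, v), (v, u)})\<^sup>*}) ` S = cls ` (S - U) \<union> {U}"
    unfolding new_cls using uv uv_U by force
  have "cls x = cls u \<or> cls x = cls v" if "x \<in> U" for x
    using that in_U cls_eq by blast
  moreover note uv_U
  ultimately have old: "cls ` S = cls ` (S - U) \<union> {cls u, cls v}"
    using uv by blast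
  have "cls x \<noteq> U" "cls x \<noteq> cls u" "cls x \<noteq> cls v" if "x \<notin> U" for x
  proof -
    have "x \<in> cls x" "x \<notin> cls u" "x \<notin> cls v"
      using that self U_def by auto
    then show "cls x \<noteq> U" "cls x \<noteq> cls u" "cls x \<noteq> cls v"
      unfolding U_def by auto
  qed
  then have disj: "cls ` (S - U) \<inter> {U} = {}" "cls ` (S - U) \<inter> {cls u, cls v} = {}"
    by auto
  have "cls u \<noteq> cls v"
    using False self[of v] unfolding cls_def by auto
  then have "num_components S Q = card (cls ` (S - U)) + 2"
    unfolding num_components_def cls_def[symmetric] old
    using fin disj by (simp add: card_Un_disjoint)
  moreover have "num_components S (Q \<union> {(u, v), (v, u)}) = card (cls ` (S - U)) + 1"
    unfolding num_components_def new using fin disj by (simp add: card_Un_disjoint)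
  ultimately show ?thesis
    using False by simp
qed

corollary num_components_Un_edge_le:
  "finite S \<Longrightarrow> sym Q \<Longrightarrow> u \<in> S \<Longrightarrow> v \<in> S \<Longrightarrow>
    num_components S (Q \<union> {(u, v), (v, u)}) \<le> num_components S Q"
  using num_components_Un_edge[of S Q u v] by (simp split: if_splits)

corollary num_components_le_Un_edge:
  "finite S \<Longrightarrow> sym Q \<Longrightarrow> u \<in> S \<Longrightarrow> v \<in> S \<Longrightarrow>
    num_components S Q \<le> num_components S (Q \<union> {(u, v), (v, u)}) + 1"
  using num_components_Un_edge[of S Q u v] by (simp split: if_splits)

lemma rtrancl_Un_unreachable:
  assumes "(u, w) \<in> (B \<union> F)\<^sup>*" and "B \<union> F \<subseteq> R" and "\<forall>(p, q) \<in> F. (u, p) \<notin> R\<^sup>*"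
  shows "(u, w) \<in> B\<^sup>*"
  using assms(1)
proof (induction rule: rtrancl_induct)
  case (step y z)
  then have "(u, y) \<in> R\<^sup>*"
    using assms(2) rtrancl_mono by blast
  then have "(y, z) \<in> B"
    using step.hyps(2) assms(3) by blast
  then show ?case
    using step.IH by (rule rtrancl_into_rtrancl[rotated])
qed simp

section \<open>Orbits of maps on finite sets\<close>

lemma funpow_in_set: "f ` S \<subseteq> S \<Longrightarrow> x \<in> S \<Longrightarrow> (f ^^ k) x \<in> S"
  by (induction k) auto

lemma bij_betw_funpow_return:
  assumes fin: "finite S" and bij: "bij_betw f S S" and x: "x \<in> S"
  obtains k where "k > 0" "(f ^^ k) x = x"
proof -
  have sub: "f ` S \<subseteq> S"
    using bij bij_betw_imp_surj_on by blast
  let ?g = "\<lambda>k. (f ^^ k) x"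
  have "?g ` {..card S} \<subseteq> S"
    using funpow_in_set[OF sub x] by auto
  then have "card (?g ` {..card S}) \<le> card S"
    using fin card_mono by blast
  then have "card (?g ` {..card S}) < card {..card S}"
    by simp
  then have "\<not> inj_on ?g {..card S}"
    using pigeonhole by blast
  then obtain i j where "i \<le> card S" "j \<le> card S" "i \<noteq> j" "?g i = ?g j"
    unfolding inj_on_def by blast
  then obtain i j where ij: "i < j" "?g i = ?g j"
    by (metis linorder_neqE_nat)
  have "(f ^^ j) x = (f ^^ i) ((f ^^ (j - i)) x)"
    using ij(1) by (metis funpow_add le_add_diff_inverse less_imp_le o_apply)
  then have "(f ^^ i) ((f ^^ (j - i)) x) = (f ^^ i) x"
    using ij(2) by simp
  moreover have "(f ^^ (j - i)) x \<in> S"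
    using funpow_in_set[OF sub x] .
  ultimately have "(f ^^ (j - i)) x = x"
    using bij_betw_funpow[OF bij] x unfolding bij_betw_def inj_on_def by blast
  with ij(1) show thesis
    by (intro that[of "j - i"]) auto
qed

lemma orbit_subset: "c' \<in> orbit f c \<Longrightarrow> orbit f c' \<subseteq> orbit f c"
proof
  fix z
  assume "c' \<in> orbit f c" "z \<in> orbit f c'"
  then obtain k j where "c' = (f ^^ k) c" "z = (f ^^ j) c'"
    unfolding orbit_def by blast
  then have "z = (f ^^ (j + k)) c"
    by (simp add: funpow_add)
  then show "z \<in> orbit f c"
    unfolding orbit_def by blast
qed

lemma self_in_orbit: "c \<in> orbit f c"
  unfolding orbit_def by (auto intro: exI[of _ 0])

lemma orbit_period3:
  assumes "f (f (f d)) = d"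
  shows "orbit f d = {d, f d, f (f d)}"
proof -
  have "(f ^^ k) d = (f ^^ (k mod 3)) d" for k
  proof (induction k rule: less_induct)
    case (less k)
    show ?case
    proof (cases "k < 3")
      case False
      then have "(f ^^ k) d = (f ^^ (k - 3)) ((f ^^ 3) d)"
        by (metis funpow_add le_add_diff_inverse2 not_less o_apply)
      also have "(f ^^ 3) d = d"
        using assms by (simp add: numeral_3_eq_3)
      finally show ?thesis
        using less.IH[of "k - 3"] False by (simp add: mod_if)
    qed simp
  qed
  moreover have "(f ^^ (k mod 3)) d \<in> {d, f d, f (f d)}" for k
  proof -
    have "k mod 3 = 0 \<or> k mod 3 = 1 \<or> k mod 3 = 2"
      by arith
    then show ?thesis
      by (auto simp: numeral_2_eq_2)
  qed
  ultimately have "orbit f d \<subseteq> {d, f d, f (f d)}"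
    unfolding orbit_def by auto
  moreover have "d = (f ^^ 0) d" "f d = (f ^^ 1) d" "f (f d) = (f ^^ 2) d"
    by (simp_all add: numeral_2_eq_2)
  then have "{d, f d, f (f d)} \<subseteq> orbit f d"
    unfolding orbit_def by blast
  ultimately show ?thesis
    by blast
qed

lemma card_orbits_period3:
  assumes f3: "\<And>d. d \<in> D \<Longrightarrow> f (f (f d)) = d" and "A \<subseteq> D"
    and not_in_A: "\<And>a. a \<in> A \<Longrightarrow> f a \<notin> A \<and> f (f a) \<notin> A"
    and cover: "\<And>d. d \<in> D \<Longrightarrow> \<exists>a\<in>A. d = a \<or> d = f a \<or> d = f (f a)"
  shows "card {orbit f d | d. d \<in> D} = card A"
proof -
  have orb: "orbit f d = {d, f d, f (f d)}" if "d \<in> D" for d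
    using orbit_period3[of f d] f3[OF that] by blast
  have "\<exists>a\<in>A. orbit f d = orbit f a" if d: "d \<in> D" for d
  proof -
    obtain a where a: "a \<in> A" "d = a \<or> d = f a \<or> d = f (f a)"
      using cover[OF d] by blast
    then have "a \<in> D" "f (f (f a)) = a"
      using f3 \<open>A \<subseteq> D\<close> by blast+
    then have "orbit f d = orbit f a"
      using a orb[OF d] orb[OF \<open>a \<in> D\<close>] by auto
    then show ?thesis
      using a(1) by blast
  qed
  then have "{orbit f d | d. d \<in> D} = orbit f ` A"
    using \<open>A \<subseteq> D\<close> by (auto simp: image_iff)
  moreover have "inj_on (orbit f) A"
  proof (rule inj_onI)
    fix a b
    assume ab: "a \<in> A" "b \<in> A" "orbit f a = orbit f b"
    then have "b \<in> {a, f a, f (f a)}"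
      using self_in_orbit[of b f] orb \<open>A \<subseteq> D\<close> by blast
    then show "a = b"
      using not_in_A ab by auto
  qed
  ultimately show ?thesis
    by (simp add: card_image)
qed

lemma orbit_first_return:
  assumes fD: "f ` D \<subseteq> D" and "Ci \<subseteq> D"
    and out: "\<And>x. x \<in> D - Ci \<Longrightarrow> f x \<in> Ci"
    and psi: "\<And>c. c \<in> Ci \<Longrightarrow> \<psi> c = (if f c \<in> Ci then f c else f (f c))"
    and c: "c \<in> Ci"
  shows "orbit \<psi> c = orbit f c \<inter> Ci"
proof -
  have psi_in: "\<psi> x \<in> Ci" if "x \<in> Ci" for x
    using psi[OF that] out fD that \<open>Ci \<subseteq> D\<close> by (auto split: if_splits)
  have "(\<psi> ^^ k) c \<in> Ci \<and> (\<exists>m. (\<psi> ^^ k) c = (f ^^ m) c)" for k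
  proof (induction k)
    case (Suc k)
    then obtain m where m: "(\<psi> ^^ k) c = (f ^^ m) c" and in_Ci: "(\<psi> ^^ k) c \<in> Ci"
      by blast
    then have "(\<psi> ^^ Suc k) c = (f ^^ Suc m) c \<or> (\<psi> ^^ Suc k) c = (f ^^ Suc (Suc m)) c"
      using psi by simp
    then show ?case
      using psi_in in_Ci by (metis funpow.simps(2) o_apply)
  qed (use c in \<open>auto intro: exI[of _ 0]\<close>)
  then have "orbit \<psi> c \<subseteq> orbit f c \<inter> Ci"
    unfolding orbit_def by blast
  moreover have "\<exists>k. (f ^^ m) c = (\<psi> ^^ k) c" if "(f ^^ m) c \<in> Ci" for m
    using that
  proof (induction m rule: less_induct)
    case (less m)
    show ?case
    proof (cases m)
      case 0
      then show ?thesis by (auto intro: exI[of _ 0])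
    next
      case (Suc m1)
      show ?thesis
      proof (cases "(f ^^ m1) c \<in> Ci")
        case True
        then obtain k where "(f ^^ m1) c = (\<psi> ^^ k) c"
          using less Suc by blast
        then have "(f ^^ m) c = (\<psi> ^^ Suc k) c"
          using psi True less.prems Suc by simp
        then show ?thesis ..
      next
        case False
        then obtain m2 where m2: "m1 = Suc m2"
          using c by (cases m1) auto
        have "(f ^^ m2) c \<in> D"
          using funpow_in_set[OF fD] c \<open>Ci \<subseteq> D\<close> by blast
        then have in_Ci: "(f ^^ m2) c \<in> Ci"
          using out False m2 by fastforce
        moreover have "m2 < m"
          using Suc m2 by simp
        ultimately obtain k where k: "(f ^^ m2) c = (\<psi> ^^ k) c"
          using less.IH by blast
        then have "(f ^^ m) c = (\<psi> ^^ Suc k) c"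
          using psi[OF in_Ci] False Suc m2 by simp
        then show ?thesis ..
      qed
    qed
  qed
  then have "orbit f c \<inter> Ci \<subseteq> orbit \<psi> c"
    unfolding orbit_def by blast
  ultimately show ?thesis
    by blast
qed

lemma card_orbits_first_return:
  assumes fin: "finite D" and bij: "bij_betw f D D" and "Ci \<subseteq> D"
    and out: "\<And>x. x \<in> D - Ci \<Longrightarrow> f x \<in> Ci"
    and psi: "\<And>c. c \<in> Ci \<Longrightarrow> \<psi> c = (if f c \<in> Ci then f c else f (f c))"
  shows "card (orbit f ` D) = card (orbit \<psi> ` Ci)"
proof -
  have fD: "f ` D \<subseteq> D"
    using bij bij_betw_imp_surj_on by blast
  have same_orbit: "orbit f c = orbit f c'" if "c \<in> orbit f c'" "c' \<in> orbit f c" for c c'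
    using orbit_subset[OF that(1)] orbit_subset[OF that(2)] by (rule equalityI)
  have "\<exists>c\<in>Ci. orbit f d = orbit f c" if d: "d \<in> D" for d
  proof (cases "d \<in> Ci")
    case False
    obtain k where k: "k > 0" "(f ^^ k) d = d"
      using bij_betw_funpow_return[OF fin bij d] by blast
    then have "d = (f ^^ (k - 1)) (f d)"
      by (metis Suc_diff_1 funpow_Suc_right o_apply)
    then have "d \<in> orbit f (f d)"
      unfolding orbit_def by blast
    moreover have "f d \<in> orbit f d"
      unfolding orbit_def by (auto intro: exI[of _ 1])
    ultimately have "orbit f d = orbit f (f d)"
      using same_orbit by blast
    then show ?thesis
      using out d False by blast
  qed blast
  then have "orbit f ` D = orbit f ` Ci"
    using \<open>Ci \<subseteq> D\<close> unfolding image_def by blast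
  moreover have "inj_on (\<lambda>X. X \<inter> Ci) (orbit f ` Ci)"
  proof (rule inj_onI)
    fix O1 O2
    assume "O1 \<in> orbit f ` Ci" "O2 \<in> orbit f ` Ci" "O1 \<inter> Ci = O2 \<inter> Ci"
    then obtain c1 c2 where "c1 \<in> Ci" "c2 \<in> Ci" "O1 = orbit f c1" "O2 = orbit f c2"
      "orbit f c1 \<inter> Ci = orbit f c2 \<inter> Ci"
      by blast
    then show "O1 = O2"
      using self_in_orbit[of c1 f] self_in_orbit[of c2 f] same_orbit by blast
  qed
  moreover have "(\<lambda>X. X \<inter> Ci) ` orbit f ` Ci = orbit \<psi> ` Ci"
    using orbit_first_return[OF fD \<open>Ci \<subseteq> D\<close> out psi]
    by (auto simp: image_image)
  ultimately show ?thesis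
    by (metis card_image)
qed

section \<open>Pairs of involutions\<close>

lemma involution_comp_funpow_neq:
  assumes alpha: "\<And>x. x \<in> S \<Longrightarrow> \<alpha> x \<in> S \<and> \<alpha> (\<alpha> x) = x \<and> \<alpha> x \<noteq> x"
    and tau: "\<And>x. x \<in> S \<Longrightarrow> \<tau> x \<in> S \<and> \<tau> (\<tau> x) = x \<and> \<tau> x \<noteq> x"
    and y: "y \<in> S"
  shows "((\<tau> \<circ> \<alpha>) ^^ j) y \<noteq> \<alpha> y"
proof
  define \<pi> where "\<pi> = \<tau> \<circ> \<alpha>"
  define \<rho> where "\<rho> = \<alpha> \<circ> \<tau>"
  assume eq: "(\<pi> ^^ j) y = \<alpha> y"
  have in_S: "(\<pi> ^^ i) y \<in> S" for i
    using funpow_in_set[of \<pi> S] alpha tau y unfolding \<pi>_def by auto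
  have undo: "(\<rho> ^^ i) ((\<pi> ^^ i) x) = x" if "x \<in> S" for i x
    using that
  proof (induction i arbitrary: x)
    case (Suc i)
    have "(\<pi> ^^ i) x \<in> S"
      using funpow_in_set[of \<pi> S] alpha tau Suc.prems unfolding \<pi>_def by auto
    then have "\<rho> (\<pi> ((\<pi> ^^ i) x)) = (\<pi> ^^ i) x"
      using alpha tau unfolding \<pi>_def \<rho>_def by auto
    moreover have "(\<rho> ^^ Suc i) ((\<pi> ^^ Suc i) x) = (\<rho> ^^ i) (\<rho> (\<pi> ((\<pi> ^^ i) x)))"
      by (simp add: funpow_swap1)
    ultimately show ?case
      using Suc by simp
  qed simp
  have conj: "\<alpha> ((\<pi> ^^ i) y) = (\<rho> ^^ i) (\<alpha> y)" for i
  proof (induction i)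
    case (Suc i)
    have "\<alpha> ((\<pi> ^^ Suc i) y) = \<rho> (\<alpha> ((\<pi> ^^ i) y))"
      using alpha in_S[of i] unfolding \<pi>_def \<rho>_def by simp
    then show ?case
      using Suc by simp
  qed simp
  have "(\<rho> ^^ i) ((\<pi> ^^ j) y) = \<alpha> ((\<pi> ^^ i) y)" for i
    using eq conj by simp
  obtain i where "j = 2 * i \<or> j = 2 * i + 1"
    by (metis dvd_mult_div_cancel odd_two_times_div_two_succ)
  then show False
  proof
    assume "j = 2 * i"
    then have "(\<rho> ^^ i) ((\<pi> ^^ j) y) = (\<pi> ^^ i) y"
      using undo[OF in_S[of i], of i] by (simp add: funpow_add mult_2)
    then show False
      using \<open>\<And>i. (\<rho> ^^ i) ((\<pi> ^^ j) y) = \<alpha> ((\<pi> ^^ i) y)\<close> alpha in_S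
      by metis
  next
    assume "j = 2 * i + 1"
    then have "(\<rho> ^^ i) ((\<pi> ^^ j) y) = \<pi> ((\<pi> ^^ i) y)"
      using undo[OF in_S[of "Suc i"], of i] by (simp add: funpow_add mult_2 funpow_swap1)
    then have "\<tau> (\<alpha> ((\<pi> ^^ i) y)) = \<alpha> ((\<pi> ^^ i) y)"
      using \<open>\<And>i. (\<rho> ^^ i) ((\<pi> ^^ j) y) = \<alpha> ((\<pi> ^^ i) y)\<close> unfolding \<pi>_def
      by simp
    then show False
      using alpha tau in_S by metis
  qed
qed

text \<open>The two involutions make \<open>S\<close> a disjoint union of cycles alternating between
  \<open>\<alpha>\<close>-edges and \<open>\<tau>\<close>-edges, so no edge is a bridge: going once around the cycle of
  \<open>x0\<close> under \<open>\<tau> \<circ> \<alpha>\<close> reaches \<open>\<tau> x0\<close> without the \<open>\<tau>\<close>-edge at \<open>x0\<close>.\<close>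

lemma involutions_edge_not_bridge:
  assumes fin: "finite S"
    and alpha: "\<And>x. x \<in> S \<Longrightarrow> \<alpha> x \<in> S \<and> \<alpha> (\<alpha> x) = x \<and> \<alpha> x \<noteq> x"
    and tau: "\<And>x. x \<in> S \<Longrightarrow> \<tau> x \<in> S \<and> \<tau> (\<tau> x) = x \<and> \<tau> x \<noteq> x"
    and x0: "x0 \<in> S"
  shows "(x0, \<tau> x0) \<in> ({(x, \<alpha> x) | x. x \<in> S} \<union> {(x, \<tau> x) | x. x \<in> S - {x0, \<tau> x0}})\<^sup>*"
proof -
  define E where "E = {(x, \<alpha> x) | x. x \<in> S} \<union> {(x, \<tau> x) | x. x \<in> S - {x0, \<tau> x0}}"
  define \<pi> where "\<pi> = \<tau> \<circ> \<alpha>"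
  have in_S: "(\<pi> ^^ i) x0 \<in> S" for i
    using funpow_in_set[of \<pi> S] alpha tau x0 unfolding \<pi>_def by auto
  have "bij_betw \<pi> S S"
  proof (rule bij_betw_byWitness[where f' = "\<alpha> \<circ> \<tau>"])
  qed (use alpha tau in \<open>auto simp: \<pi>_def\<close>)
  then obtain k where "k > 0" "(\<pi> ^^ k) x0 = x0"
    using bij_betw_funpow_return[OF fin _ x0] by blast
  define m where "m = (LEAST k. k > 0 \<and> (\<pi> ^^ k) x0 = x0)"
  have m: "m > 0" "(\<pi> ^^ m) x0 = x0"
    using LeastI[of "\<lambda>k. k > 0 \<and> (\<pi> ^^ k) x0 = x0"] \<open>k > 0\<close> \<open>(\<pi> ^^ k) x0 = x0\<close>
    unfolding m_def by blast+
  have path: "(x0, (\<pi> ^^ j) x0) \<in> E\<^sup>*" if "j < m" for j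
    using that
  proof (induction j)
    case (Suc j)
    let ?y = "(\<pi> ^^ j) x0"
    have "\<alpha> ?y \<noteq> x0"
      using involution_comp_funpow_neq[OF alpha tau x0, of j] alpha in_S[of j]
      unfolding \<pi>_def by metis
    moreover have "\<alpha> ?y \<noteq> \<tau> x0"
    proof
      assume "\<alpha> ?y = \<tau> x0"
      then have "(\<pi> ^^ Suc j) x0 = x0"
        using tau x0 by (simp add: \<pi>_def)
      then show False
        using not_less_Least[of "Suc j" "\<lambda>k. k > 0 \<and> (\<pi> ^^ k) x0 = x0"] Suc.prems
        unfolding m_def by blast
    qed
    ultimately have "(?y, \<alpha> ?y) \<in> E" "(\<alpha> ?y, (\<pi> ^^ Suc j) x0) \<in> E"
      using in_S[of j] alpha unfolding E_def \<pi>_def by auto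
    then show ?case
      using Suc by (meson Suc_lessD rtrancl.rtrancl_into_rtrancl)
  qed simp
  let ?y = "(\<pi> ^^ (m - 1)) x0"
  have "\<tau> (\<alpha> ?y) = x0"
    using m by (metis Suc_diff_1 comp_apply funpow.simps(2) \<pi>_def)
  then have "\<alpha> ?y = \<tau> x0"
    using tau alpha in_S by metis
  moreover have "(?y, \<alpha> ?y) \<in> E"
    using in_S unfolding E_def by blast
  ultimately show ?thesis
    using path[of "m - 1"] m(1) unfolding E_def[symmetric]
    by (metis diff_less less_one rtrancl.rtrancl_into_rtrancl)
qed

section \<open>Connected configurations\<close>

locale conn_conf =
  fixes C :: "'d rconf"
  assumes conn_config: "conn_config C"
begin

lemma finite_darts: "finite (darts C)"
  and darts_nonempty: "darts C \<noteq> {}"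
  and alph_in_darts: "d \<in> darts C \<Longrightarrow> alph C d \<in> darts C"
  and alph_neq: "d \<in> darts C \<Longrightarrow> alph C d \<noteq> d"
  and alph_alph: "d \<in> darts C \<Longrightarrow> alph C (alph C d) = d"
  and bij_sig: "bij_betw (sig C) (darts C) (darts C)"
  and sig_neq: "d \<in> darts C \<Longrightarrow> sig C d \<noteq> d"
  and sig3: "d \<in> darts C \<Longrightarrow> sig C (sig C (sig C d)) = d"
  and arcs_subset: "arcs C \<subseteq> darts C"
  and alph_in_arcs: "d \<in> arcs C \<Longrightarrow> alph C d \<in> arcs C"
  and vertex_one_arc: "d \<in> darts C \<Longrightarrow> card ({d, sig C d, sig C (sig C d)} \<inter> arcs C) = 1"
  and darts_connected: "d \<in> darts C \<Longrightarrow> e \<in> darts C \<Longrightarrow>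
        (d, e) \<in> ({(x, alph C x) | x. x \<in> darts C} \<union> {(x, sig C x) | x. x \<in> darts C})\<^sup>*"
  and euler_formula: "int (card {orbit (sig C) d | d. d \<in> darts C})
       - int (card {{d, alph C d} | d. d \<in> darts C})
       + int (card {orbit (sig C \<circ> alph C) d | d. d \<in> darts C}) = 2"
  using conn_config unfolding conn_config_def by blast+

lemma sig_in_darts: "d \<in> darts C \<Longrightarrow> sig C d \<in> darts C"
  using bij_sig bij_betw_imp_surj_on by blast

lemma sig_inj: "d \<in> darts C \<Longrightarrow> e \<in> darts C \<Longrightarrow> sig C d = sig C e \<Longrightarrow> d = e"
  using bij_sig unfolding bij_betw_def inj_on_def by blast

lemma vertex_cases:
  assumes "d \<in> darts C"
  shows "d \<in> arcs C \<and> sig C d \<notin> arcs C \<and> sig C (sig C d) \<notin> arcs C \<or>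
    d \<notin> arcs C \<and> sig C d \<in> arcs C \<and> sig C (sig C d) \<notin> arcs C \<or>
    d \<notin> arcs C \<and> sig C d \<notin> arcs C \<and> sig C (sig C d) \<in> arcs C"
proof -
  have "sig C d \<noteq> d" "sig C (sig C d) \<noteq> d" "sig C (sig C d) \<noteq> sig C d"
    using assms sig_neq sig3 sig_in_darts by metis+
  then show ?thesis
    using vertex_one_arc[OF assms]
    by (cases "d \<in> arcs C"; cases "sig C d \<in> arcs C"; cases "sig C (sig C d) \<in> arcs C")
      (simp_all add: Int_insert_left card_insert_if)
qed

lemma sig_arc_notin_arcs: "a \<in> arcs C \<Longrightarrow> sig C a \<notin> arcs C"
  using vertex_cases arcs_subset by blast

lemma sig2_arc_notin_arcs: "a \<in> arcs C \<Longrightarrow> sig C (sig C a) \<notin> arcs C"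
  using vertex_cases arcs_subset by blast

lemma alph_alph_arc: "a \<in> arcs C \<Longrightarrow> alph C (alph C a) = a"
  using alph_alph arcs_subset by blast

abbreviation circ :: "'d set" where
  "circ \<equiv> circ_darts C"

lemma circ_eq: "circ = darts C - arcs C"
  by (fact circ_darts_def)

lemma finite_circ: "finite circ"
  using finite_darts circ_eq by simp

lemma sig_arc_in_circ: "a \<in> arcs C \<Longrightarrow> sig C a \<in> circ"
  using sig_arc_notin_arcs sig_in_darts arcs_subset circ_eq by blast

lemma sig2_arc_in_circ: "a \<in> arcs C \<Longrightarrow> sig C (sig C a) \<in> circ"
  using sig2_arc_notin_arcs sig_in_darts arcs_subset circ_eq by blast

lemma circ_cases: "c \<in> circ \<Longrightarrow> \<exists>a\<in>arcs C. c = sig C a \<or> c = sig C (sig C a)"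
  using vertex_cases[of c] sig3[of c] circ_eq by (metis Diff_iff)

lemma dart_cases: "d \<in> darts C \<Longrightarrow> \<exists>a\<in>arcs C. d = a \<or> d = sig C a \<or> d = sig C (sig C a)"
  using circ_cases circ_eq by blast

lemma alph_in_circ: "c \<in> circ \<Longrightarrow> alph C c \<in> circ"
  using alph_in_darts alph_alph alph_in_arcs circ_eq by (metis DiffD1 DiffD2 DiffI)

lemma sig_arc_inj: "a \<in> arcs C \<Longrightarrow> b \<in> arcs C \<Longrightarrow> sig C a = sig C b \<Longrightarrow> a = b"
  using sig_inj arcs_subset by blast

lemma sig2_arc_inj: "a \<in> arcs C \<Longrightarrow> b \<in> arcs C \<Longrightarrow> sig C (sig C a) = sig C (sig C b) \<Longrightarrow> a = b"
  using sig_inj sig_in_darts arcs_subset by (metis subsetD)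

lemma sig_arc_neq_sig2_arc: "a \<in> arcs C \<Longrightarrow> b \<in> arcs C \<Longrightarrow> sig C a \<noteq> sig C (sig C b)"
  using sig_inj sig_in_darts arcs_subset sig_arc_notin_arcs by (metis subsetD)

lemma other_sig_arc: "a \<in> arcs C \<Longrightarrow> other C (sig C a) = sig C (sig C a)"
  unfolding other_def using sig2_arc_notin_arcs by simp

lemma other_sig2_arc: "a \<in> arcs C \<Longrightarrow> other C (sig C (sig C a)) = sig C a"
  unfolding other_def using sig3 arcs_subset by auto

lemma surg_sig_arc: "a \<in> arcs C \<Longrightarrow> surg C (sig C a) = sig C (sig C (alph C a))"
  unfolding surg_def using sig3 arcs_subset by auto

lemma surg_sig2_arc: "a \<in> arcs C \<Longrightarrow> surg C (sig C (sig C a)) = sig C (alph C a)"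
  unfolding surg_def using sig3 arcs_subset sig_arc_notin_arcs by auto

definition arc_at :: "'d \<Rightarrow> 'd" where
  "arc_at c = (if sig C c \<in> arcs C then sig C c else sig C (sig C c))"

lemma arc_at_sig_arc: "a \<in> arcs C \<Longrightarrow> arc_at (sig C a) = a"
  unfolding arc_at_def using sig2_arc_notin_arcs sig3 arcs_subset by auto

lemma arc_at_sig2_arc: "a \<in> arcs C \<Longrightarrow> arc_at (sig C (sig C a)) = a"
  unfolding arc_at_def using sig3 arcs_subset by auto

lemma arc_at_in_arcs: "c \<in> circ \<Longrightarrow> arc_at c \<in> arcs C"
  using circ_cases arc_at_sig_arc arc_at_sig2_arc by metis

lemma arc_at_eqD: "c \<in> circ \<Longrightarrow> arc_at c = a \<Longrightarrow> c = sig C a \<or> c = sig C (sig C a)"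
  using circ_cases arc_at_sig_arc arc_at_sig2_arc by metis

section \<open>Partial resolutions\<close>

definition arc_closed :: "'d set \<Rightarrow> bool" where
  "arc_closed A \<longleftrightarrow> A \<subseteq> arcs C \<and> (\<forall>x\<in>A. alph C x \<in> A)"

text \<open>Circle darts model the edges of the starting circles. In the resolution where the
  arcs with darts in \<open>A\<close> are surgered, \<open>alph C\<close> joins the two darts of a circle edge and
  \<open>resolve A\<close> joins consecutive edges across a vertex; so the components of \<open>res_rel A\<close>
  are the circles of that resolution, and the components of \<open>graph_rel A\<close> are those of
  the graph formed by the starting circles and the arcs in \<open>A\<close>.\<close>

definition resolve :: "'d set \<Rightarrow> 'd \<Rightarrow> 'd" where
  "resolve A c = (if arc_at c \<in> A then surg C c else other C c)"

definition res_rel :: "'d set \<Rightarrow> ('d \<times> 'd) set" where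
  "res_rel A = {(x, alph C x) | x. x \<in> circ} \<union> {(x, resolve A x) | x. x \<in> circ}"

definition num_res_circles :: "'d set \<Rightarrow> nat" where
  "num_res_circles A = num_components circ (res_rel A)"

definition graph_rel :: "'d set \<Rightarrow> ('d \<times> 'd) set" where
  "graph_rel A = res_rel {} \<union> res_rel A"

definition num_graph_comps :: "'d set \<Rightarrow> nat" where
  "num_graph_comps A = num_components circ (graph_rel A)"

lemma resolve_sig_arc:
  "a \<in> arcs C \<Longrightarrow> resolve A (sig C a) = (if a \<in> A then sig C (sig C (alph C a)) else sig C (sig C a))"
  by (simp add: resolve_def arc_at_sig_arc surg_sig_arc other_sig_arc)

lemma resolve_sig2_arc:
  "a \<in> arcs C \<Longrightarrow> resolve A (sig C (sig C a)) = (if a \<in> A then sig C (alph C a) else sig C a)"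
  by (simp add: resolve_def arc_at_sig2_arc surg_sig2_arc other_sig2_arc)

lemma arc_closed_alph_iff: "arc_closed A \<Longrightarrow> a \<in> arcs C \<Longrightarrow> alph C a \<in> A \<longleftrightarrow> a \<in> A"
  unfolding arc_closed_def using alph_alph_arc by metis

lemma alph_involution: "c \<in> circ \<Longrightarrow> alph C c \<in> circ \<and> alph C (alph C c) = c \<and> alph C c \<noteq> c"
  using alph_in_circ alph_alph alph_neq circ_eq by auto

lemma resolve_involution:
  assumes A: "arc_closed A" and "c \<in> circ"
  shows "resolve A c \<in> circ \<and> resolve A (resolve A c) = c \<and> resolve A c \<noteq> c"
proof -
  obtain a where a: "a \<in> arcs C" "c = sig C a \<or> c = sig C (sig C a)"
    using circ_cases \<open>c \<in> circ\<close> by blast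
  have a': "alph C a \<in> arcs C" "alph C (alph C a) = a" "alph C a \<in> A \<longleftrightarrow> a \<in> A"
    using alph_in_arcs alph_alph_arc arc_closed_alph_iff[OF A] a(1) by blast+
  show ?thesis
    using a(2)
  proof (elim disjE; cases "a \<in> A")
    assume "c = sig C a" "a \<in> A"
    then show ?thesis
      using resolve_sig_arc[OF a(1)] resolve_sig2_arc[OF a'(1)] a' sig2_arc_in_circ[OF a'(1)]
        sig_arc_neq_sig2_arc[OF a(1) a'(1)] by auto
  next
    assume "c = sig C a" "a \<notin> A"
    then show ?thesis
      using resolve_sig_arc[OF a(1)] resolve_sig2_arc[OF a(1)] sig2_arc_in_circ[OF a(1)]
        sig_arc_neq_sig2_arc[OF a(1) a(1)] by auto
  next
    assume "c = sig C (sig C a)" "a \<in> A"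
    then show ?thesis
      using resolve_sig2_arc[OF a(1)] resolve_sig_arc[OF a'(1)] a' sig_arc_in_circ[OF a'(1)]
        sig_arc_neq_sig2_arc[OF a'(1) a(1)] by auto
  next
    assume "c = sig C (sig C a)" "a \<notin> A"
    then show ?thesis
      using resolve_sig_arc[OF a(1)] resolve_sig2_arc[OF a(1)] sig_arc_in_circ[OF a(1)]
        sig_arc_neq_sig2_arc[OF a(1) a(1)] by auto
  qed
qed

lemma sym_res_rel: "arc_closed A \<Longrightarrow> sym (res_rel A)"
  unfolding res_rel_def using alph_involution resolve_involution
  by (intro sym_Un sym_involution_graph) blast+

lemma sym_graph_rel: "arc_closed A \<Longrightarrow> sym (graph_rel A)"
  unfolding graph_rel_def using sym_res_rel[of "{}"] sym_res_rel[of A]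
  by (simp add: arc_closed_def sym_Un)

end

section \<open>Surgery along one arc\<close>

text \<open>Surgering the arc with halves \<open>a\<close>, \<open>a'\<close> replaces the edges \<open>c1 c2\<close> and \<open>c1' c2'\<close> of
  \<open>res_rel A\<close> at its feet by \<open>c1 c2'\<close> and \<open>c2 c1'\<close>; all other edges stay \<open>untouched\<close>.\<close>

locale arc_surgery = conn_conf +
  fixes A and a
  assumes A_closed: "arc_closed A" and a_arc: "a \<in> arcs C" and a_notin_A: "a \<notin> A"
begin

abbreviation "a' \<equiv> alph C a"
abbreviation "c1 \<equiv> sig C a"
abbreviation "c2 \<equiv> sig C (sig C a)"
abbreviation "c1' \<equiv> sig C a'"
abbreviation "c2' \<equiv> sig C (sig C a')"
abbreviation "A' \<equiv> A \<union> {a, a'}"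

lemma a'_arc: "a' \<in> arcs C"
  using alph_in_arcs a_arc by blast

lemma a'_notin_A: "a' \<notin> A"
  using arc_closed_alph_iff[OF A_closed a_arc] a_notin_A by blast

lemma alph_a': "alph C a' = a"
  using alph_alph_arc a_arc by blast

lemma feet_distinct: "c1 \<noteq> c2" "c1 \<noteq> c1'" "c1 \<noteq> c2'" "c2 \<noteq> c1'" "c2 \<noteq> c2'" "c1' \<noteq> c2'"
proof -
  have "a' \<noteq> a"
    using alph_neq a_arc arcs_subset by blast
  then show "c1 \<noteq> c1'" "c2 \<noteq> c2'"
    using sig_arc_inj[OF a_arc a'_arc] sig2_arc_inj[OF a_arc a'_arc] by auto
  show "c1 \<noteq> c2" "c1 \<noteq> c2'" "c2 \<noteq> c1'" "c1' \<noteq> c2'"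
    using sig_arc_neq_sig2_arc a_arc a'_arc by metis+
qed

lemma feet_in_circ: "c1 \<in> circ" "c2 \<in> circ" "c1' \<in> circ" "c2' \<in> circ"
  using sig_arc_in_circ sig2_arc_in_circ a_arc a'_arc by auto

lemma resolve_feet:
  "resolve A c1 = c2" "resolve A c2 = c1" "resolve A c1' = c2'" "resolve A c2' = c1'"
  using resolve_sig_arc resolve_sig2_arc a_arc a'_arc a_notin_A a'_notin_A by auto

lemma surgered_resolve_feet:
  "resolve A' c1 = c2'" "resolve A' c2 = c1'" "resolve A' c1' = c2" "resolve A' c2' = c1"
  using resolve_sig_arc[OF a_arc, of A'] resolve_sig2_arc[OF a_arc, of A']
    resolve_sig_arc[OF a'_arc, of A'] resolve_sig2_arc[OF a'_arc, of A'] alph_a'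
  by auto

lemma res_rel_empty_feet: "{(c1, c2), (c2, c1), (c1', c2'), (c2', c1')} \<subseteq> res_rel {}"
proof -
  have "resolve {} c1 = c2" "resolve {} c2 = c1" "resolve {} c1' = c2'" "resolve {} c2' = c1'"
    using resolve_sig_arc resolve_sig2_arc a_arc a'_arc by simp_all
  moreover have "(x, resolve {} x) \<in> res_rel {}" if "x \<in> circ" for x
    unfolding res_rel_def using that by blast
  ultimately show ?thesis
    using feet_in_circ by (metis empty_subsetI insert_subset)
qed

lemma surgered_resolve_off_feet:
  "{(x, resolve A' x) | x. x \<in> circ - {c1, c2, c1', c2'}}
    = {(x, resolve A x) | x. x \<in> circ - {c1, c2, c1', c2'}}"
proof -
  have "resolve A' x = resolve A x" if "x \<in> circ - {c1, c2, c1', c2'}" for x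
    using that arc_at_eqD[of x a] arc_at_eqD[of x a'] unfolding resolve_def by auto
  then show ?thesis
    unfolding Setcompr_eq_image by (intro image_cong) auto
qed

definition untouched where
  "untouched = {(x, alph C x) | x. x \<in> circ}
    \<union> {(x, resolve A x) | x. x \<in> circ - {c1, c2, c1', c2'}}"

lemma res_rel_split:
  "res_rel X = {(x, alph C x) | x. x \<in> circ} \<union> {(x, resolve X x) | x. x \<in> circ - {c1, c2, c1', c2'}}
    \<union> {(c1, resolve X c1), (c2, resolve X c2), (c1', resolve X c1'), (c2', resolve X c2')}"
  unfolding res_rel_def using feet_in_circ by blast

lemma res_rel_eq: "res_rel A = untouched \<union> {(c1, c2), (c2, c1)} \<union> {(c1', c2'), (c2', c1')}"
  unfolding res_rel_split[of A] resolve_feet untouched_def by blast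

lemma res_rel_surgered_eq:
  "res_rel A' = untouched \<union> {(c1, c2'), (c2', c1)} \<union> {(c2, c1'), (c1', c2)}"
  unfolding res_rel_split[of A'] surgered_resolve_feet surgered_resolve_off_feet untouched_def
  by blast

lemma sym_untouched: "sym untouched"
proof -
  have "resolve A x \<in> circ - {c1, c2, c1', c2'}" if "x \<in> circ - {c1, c2, c1', c2'}" for x
    using that resolve_involution[OF A_closed, of x] resolve_feet by auto
  then show ?thesis
    unfolding untouched_def using alph_involution resolve_involution[OF A_closed]
    by (intro sym_Un sym_involution_graph) auto
qed

lemma foot_edge_not_bridge: "(c1, c2) \<in> (untouched \<union> {(c1', c2'), (c2', c1')})\<^sup>*"
proof -
  have "(c1, resolve A c1) \<in> ({(x, alph C x) | x. x \<in> circ}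
      \<union> {(x, resolve A x) | x. x \<in> circ - {c1, resolve A c1}})\<^sup>*"
    using finite_circ alph_involution resolve_involution[OF A_closed] feet_in_circ
    by (intro involutions_edge_not_bridge) auto
  moreover have "{(x, alph C x) | x. x \<in> circ}
      \<union> {(x, resolve A x) | x. x \<in> circ - {c1, resolve A c1}}
      = untouched \<union> {(c1', c2'), (c2', c1')}"
    unfolding untouched_def using resolve_feet feet_in_circ feet_distinct by auto
  ultimately show ?thesis
    using resolve_feet by simp
qed

lemma foot_edge_not_bridge': "(c1', c2') \<in> (untouched \<union> {(c1, c2), (c2, c1)})\<^sup>*"
proof -
  have "(c1', resolve A c1') \<in> ({(x, alph C x) | x. x \<in> circ}
      \<union> {(x, resolve A x) | x. x \<in> circ - {c1', resolve A c1'}})\<^sup>*"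
    using finite_circ alph_involution resolve_involution[OF A_closed] feet_in_circ
    by (intro involutions_edge_not_bridge) auto
  moreover have "{(x, alph C x) | x. x \<in> circ}
      \<union> {(x, resolve A x) | x. x \<in> circ - {c1', resolve A c1'}}
      = untouched \<union> {(c1, c2), (c2, c1)}"
    unfolding untouched_def using resolve_feet feet_in_circ feet_distinct by auto
  ultimately show ?thesis
    using resolve_feet by simp
qed

lemma num_res_circles_surgery_le: "num_res_circles A' \<le> num_res_circles A + 1"
proof -
  let ?U = "untouched \<union> {(c1', c2'), (c2', c1')}"
  have "sym ?U"
    using sym_untouched sym_edge by (rule sym_Un)
  moreover have "res_rel A = ?U \<union> {(c1, c2), (c2, c1)}"
    unfolding res_rel_eq by blast
  ultimately have "(res_rel A)\<^sup>* = ?U\<^sup>*"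
    using foot_edge_not_bridge rtrancl_Un_connected_edge by metis
  then have "num_res_circles A = num_components circ ?U"
    unfolding num_res_circles_def by (rule num_components_cong)
  then have "num_components circ untouched \<le> num_res_circles A + 1"
    using num_components_le_Un_edge[OF finite_circ sym_untouched feet_in_circ(3,4)] by simp
  moreover have "num_res_circles A' \<le> num_components circ (untouched \<union> {(c1, c2'), (c2', c1)})"
    unfolding num_res_circles_def res_rel_surgered_eq
    by (intro num_components_Un_edge_le finite_circ sym_Un sym_untouched sym_edge feet_in_circ)
  moreover have "\<dots> \<le> num_components circ untouched"
    by (intro num_components_Un_edge_le finite_circ sym_untouched feet_in_circ)
  ultimately show ?thesis
    by linarith
qed

lemma graph_rel_surgered_eq:
  "graph_rel A' = graph_rel A \<union> {(c1, c2'), (c2', c1)} \<union> {(c2, c1'), (c1', c2)}"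
  unfolding graph_rel_def res_rel_surgered_eq res_rel_eq using res_rel_empty_feet by blast

lemma num_graph_comps_surgery_eq:
  assumes "(c1, c1') \<in> (res_rel A)\<^sup>*"
  shows "num_graph_comps A' = num_graph_comps A"
proof -
  let ?K = "graph_rel A"
  have sym_K: "sym ?K"
    using sym_graph_rel[OF A_closed] .
  have "(c1, c1') \<in> ?K\<^sup>*"
    using assms rtrancl_mono[of "res_rel A" ?K] unfolding graph_rel_def by blast
  moreover have "(c1', c2') \<in> ?K" "(c2, c1) \<in> ?K"
    using res_rel_empty_feet unfolding graph_rel_def by blast+
  ultimately have "(c1, c2') \<in> ?K\<^sup>*" "(c2, c1') \<in> ?K\<^sup>*"
    by (meson rtrancl_into_rtrancl converse_rtrancl_into_rtrancl)+
  then have "{(c1, c2'), (c2', c1)} \<union> {(c2, c1'), (c1', c2)} \<subseteq> ?K\<^sup>*"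
    using rtrancl_sym[OF sym_K] by blast
  then have "(graph_rel A')\<^sup>* = ?K\<^sup>*"
    unfolding graph_rel_surgered_eq Un_assoc by (rule rtrancl_Un_subset_rtrancl)
  then show ?thesis
    unfolding num_graph_comps_def by (rule num_components_cong)
qed

lemma num_graph_comps_surgery_ge: "num_graph_comps A \<le> num_graph_comps A' + 1"
proof -
  let ?K = "graph_rel A \<union> {(c1, c2'), (c2', c1)}"
  have sym_K: "sym ?K"
    using sym_graph_rel[OF A_closed] sym_edge by (rule sym_Un)
  have "(c2, c1) \<in> ?K" "(c1, c2') \<in> ?K" "(c2', c1') \<in> ?K"
    using res_rel_empty_feet unfolding graph_rel_def by blast+
  then have "(c2, c1') \<in> ?K\<^sup>*"
    by (meson r_into_rtrancl rtrancl_into_rtrancl)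
  with sym_K have "(graph_rel A')\<^sup>* = ?K\<^sup>*"
    unfolding graph_rel_surgered_eq by (rule rtrancl_Un_connected_edge)
  then have "num_graph_comps A' = num_components circ ?K"
    unfolding num_graph_comps_def by (rule num_components_cong)
  then show ?thesis
    using num_components_le_Un_edge[OF finite_circ sym_graph_rel[OF A_closed] feet_in_circ(1,4)]
    unfolding num_graph_comps_def by simp
qed

lemma feet_connected_untouched:
  assumes "(c1, c1') \<notin> (res_rel A)\<^sup>*"
  shows "(c1, c2) \<in> untouched\<^sup>*" "(c1', c2') \<in> untouched\<^sup>*"
proof -
  let ?R = "res_rel A"
  have sym_R: "sym ?R"
    using sym_res_rel[OF A_closed] .
  have edges: "(c2', c1') \<in> ?R" "(c2, c1) \<in> ?R"
    unfolding res_rel_eq by blast+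
  have c1_c2': "(c1, c2') \<notin> ?R\<^sup>*"
    using assms edges(1) rtrancl_into_rtrancl[of c1 c2' ?R c1'] by blast
  have c1'_c1: "(c1', c1) \<notin> ?R\<^sup>*"
    using assms rtrancl_sym[OF sym_R, of c1' c1] by blast
  have c1'_c2: "(c1', c2) \<notin> ?R\<^sup>*"
    using c1'_c1 edges(2) rtrancl_into_rtrancl[of c1' c2 ?R c1] by blast
  have "untouched \<union> {(c1', c2'), (c2', c1')} \<subseteq> ?R"
    unfolding res_rel_eq by blast
  with foot_edge_not_bridge show "(c1, c2) \<in> untouched\<^sup>*"
    by (rule rtrancl_Un_unreachable) (use assms c1_c2' in simp)
  have "untouched \<union> {(c1, c2), (c2, c1)} \<subseteq> ?R"
    unfolding res_rel_eq by blast
  with foot_edge_not_bridge' show "(c1', c2') \<in> untouched\<^sup>*"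
    by (rule rtrancl_Un_unreachable) (use c1'_c1 c1'_c2 in simp)
qed

lemma num_res_circles_surgery_merge:
  assumes "(c1, c1') \<notin> (res_rel A)\<^sup>*"
  shows "num_res_circles A' + 1 = num_res_circles A"
proof -
  let ?R = "res_rel A \<union> {(c1, c2'), (c2', c1)}"
  have sym_R: "sym (res_rel A)"
    using sym_res_rel[OF A_closed] .
  have edges: "(c2', c1') \<in> res_rel A" "(c2, c1) \<in> res_rel A"
    unfolding res_rel_eq by blast+
  then have "(c1, c2') \<notin> (res_rel A)\<^sup>*"
    using assms by (meson rtrancl_into_rtrancl)
  then have merge: "num_components circ ?R + 1 = num_res_circles A"
    using num_components_Un_edge[OF finite_circ sym_R feet_in_circ(1,4)]
    unfolding num_res_circles_def by simp
  have "(c2, c1') \<in> ?R\<^sup>*"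
    using edges by (meson UnCI insertCI r_into_rtrancl rtrancl_into_rtrancl)
  with sym_Un[OF sym_R sym_edge] have "(?R \<union> {(c2, c1'), (c1', c2)})\<^sup>* = ?R\<^sup>*"
    by (rule rtrancl_Un_connected_edge)
  moreover have "(?R \<union> {(c2, c1'), (c1', c2)})\<^sup>* = (res_rel A')\<^sup>*"
  proof -
    have "untouched\<^sup>* \<subseteq> (res_rel A')\<^sup>*"
      unfolding res_rel_surgered_eq by (rule rtrancl_mono) blast
    then have "{(c1, c2), (c2, c1), (c1', c2'), (c2', c1')} \<subseteq> (res_rel A')\<^sup>*"
      using feet_connected_untouched[OF assms] rtrancl_sym[OF sym_untouched] by blast
    moreover have "?R \<union> {(c2, c1'), (c1', c2)}
        = res_rel A' \<union> {(c1, c2), (c2, c1), (c1', c2'), (c2', c1')}"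
      unfolding res_rel_eq res_rel_surgered_eq by blast
    ultimately show ?thesis
      using rtrancl_Un_subset_rtrancl by metis
  qed
  ultimately have "num_res_circles A' = num_components circ ?R"
    unfolding num_res_circles_def by (metis num_components_cong)
  with merge show ?thesis
    by simp
qed


text \<open>Each surgery increases \<open>num_res_circles - 2 * num_graph_comps\<close> by at most one: either
  both feet lie on one circle and no components of the graph merge, or two circles merge.\<close>

lemma num_res_circles_graph_comps_surgery:
  "num_res_circles A' + 2 * num_graph_comps A \<le> num_res_circles A + 1 + 2 * num_graph_comps A'"
proof (cases "(c1, c1') \<in> (res_rel A)\<^sup>*")
  case True
  then show ?thesis
    using num_res_circles_surgery_le num_graph_comps_surgery_eq by simp
next
  case False
  then show ?thesis
    using num_res_circles_surgery_merge num_graph_comps_surgery_ge by simp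
qed

end

section \<open>The number of starting and ending circles\<close>

context conn_conf
begin

lemma card_starts_eq: "card (starts C) = num_res_circles {}"
proof -
  have "res_rel {} = {(x, alph C x) | x. x \<in> circ} \<union> {(x, other C x) | x. x \<in> circ}"
    unfolding res_rel_def resolve_def by simp
  then show ?thesis
    unfolding starts_def start_circ_def num_res_circles_def num_components_def by simp
qed

lemma card_ends_eq: "card (ends C) = num_res_circles (arcs C)"
proof -
  have "{(x, resolve (arcs C) x) | x. x \<in> circ} = {(x, surg C x) | x. x \<in> circ}"
    unfolding Setcompr_eq_image by (intro image_cong) (auto simp: resolve_def arc_at_in_arcs)
  then have "res_rel (arcs C) = {(x, alph C x) | x. x \<in> circ} \<union> {(x, surg C x) | x. x \<in> circ}"
    unfolding res_rel_def by simp
  then show ?thesis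
    unfolding ends_def end_circ_def num_res_circles_def num_components_def by simp
qed

lemma finite_arcs: "finite (arcs C)"
  using finite_darts arcs_subset finite_subset by blast

lemma card_arcs_eq: "card (arcs C) = 2 * dim C"
proof -
  let ?P = "{{d, alph C d} | d. d \<in> arcs C}"
  have "finite ?P"
    using finite_arcs by (simp add: Setcompr_eq_image)
  moreover have "\<Union>?P = arcs C"
    using alph_in_arcs by blast
  moreover have "card p = 2" if p: "p \<in> ?P" for p
  proof -
    obtain d where "d \<in> arcs C" "p = {d, alph C d}"
      using p by blast
    moreover have "alph C d \<noteq> d"
      using calculation(1) alph_neq arcs_subset by blast
    ultimately show ?thesis
      by simp
  qed
  moreover have "p \<inter> q = {}" if "p \<in> ?P" "q \<in> ?P" "p \<noteq> q" for p q
    using that alph_alph_arc by auto (metis alph_alph_arc)+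
  ultimately have "2 * card ?P = card (arcs C)"
    using finite_arcs card_partition[of ?P 2] by simp
  then show ?thesis
    unfolding dim_def by simp
qed

lemma arc_closed_arcs: "arc_closed (arcs C)"
  unfolding arc_closed_def using alph_in_arcs by blast

lemma arc_closed_Diff_arc:
  assumes "arc_closed A" "a \<in> A"
  shows "arc_closed (A - {a, alph C a})" "card A = card (A - {a, alph C a}) + 2"
proof -
  have "A \<subseteq> arcs C" "alph C a \<in> A" "alph C a \<noteq> a"
    using assms alph_neq arcs_subset unfolding arc_closed_def by blast+
  have "alph C x \<in> A - {a, alph C a}" if "x \<in> A - {a, alph C a}" for x
  proof -
    have "x \<in> arcs C" "alph C x \<in> A"
      using that assms(1) unfolding arc_closed_def by blast+
    then show ?thesis
      using that alph_alph_arc[of x] alph_alph_arc[of a] \<open>A \<subseteq> arcs C\<close> assms(2)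
      by auto
  qed
  then show "arc_closed (A - {a, alph C a})"
    using \<open>A \<subseteq> arcs C\<close> unfolding arc_closed_def by blast
  have "finite A"
    using \<open>A \<subseteq> arcs C\<close> finite_arcs finite_subset by blast
  moreover have "{a, alph C a} \<subseteq> A" "card {a, alph C a} = 2"
    using \<open>alph C a \<in> A\<close> \<open>alph C a \<noteq> a\<close> assms(2) by auto
  ultimately show "card A = card (A - {a, alph C a}) + 2"
    using card_Diff_subset[of "{a, alph C a}" A] card_mono[of A "{a, alph C a}"] by simp
qed

text \<open>For \<open>A = arcs C\<close> this is the bound \<open>card (starts C) + card (ends C) \<le> dim C + 2\<close>: then
  the graph is connected and \<open>card A = 2 * dim C\<close>.\<close>

lemma num_res_circles_bound:
  assumes "arc_closed A"
  shows "2 * num_res_circles A + 2 * num_res_circles {} \<le> card A + 4 * num_graph_comps A"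
  using assms
proof (induction "card A" arbitrary: A rule: less_induct)
  case less
  show ?case
  proof (cases "A = {}")
    case True
    then show ?thesis
      unfolding num_graph_comps_def num_res_circles_def graph_rel_def by simp
  next
    case False
    then obtain a where "a \<in> A"
      by blast
    define A0 where "A0 = A - {a, alph C a}"
    have A0: "arc_closed A0" "card A = card A0 + 2"
      using arc_closed_Diff_arc[OF less.prems \<open>a \<in> A\<close>] unfolding A0_def by simp_all
    have "a \<in> arcs C" "a \<notin> A0"
      using less.prems \<open>a \<in> A\<close> unfolding A0_def arc_closed_def by blast+
    interpret arc_surgery C A0 a
      using A0(1) \<open>a \<in> arcs C\<close> \<open>a \<notin> A0\<close> by unfold_locales
    have "A = A0 \<union> {a, alph C a}"
      using less.prems \<open>a \<in> A\<close> unfolding A0_def arc_closed_def by blast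
    then have "num_res_circles A + 2 * num_graph_comps A0
        \<le> num_res_circles A0 + 1 + 2 * num_graph_comps A"
      using num_res_circles_graph_comps_surgery by simp
    moreover have "2 * num_res_circles A0 + 2 * num_res_circles {}
        \<le> card A0 + 4 * num_graph_comps A0"
      using less.hyps A0 by simp
    ultimately show ?thesis
      using A0(2) by linarith
  qed
qed

text \<open>Arc darts are sent to the circle dart following them, so that the edges of the dart
  graph become paths of circle darts.\<close>

definition circ_proj :: "'d \<Rightarrow> 'd" where
  "circ_proj d = (if d \<in> arcs C then sig C d else d)"

lemma resolve_empty_edge: "x \<in> circ \<Longrightarrow> (x, resolve {} x) \<in> graph_rel A"
  unfolding graph_rel_def res_rel_def by blast

lemma circ_proj_sig_step:
  assumes "y \<in> darts C"
  shows "(circ_proj y, circ_proj (sig C y)) \<in> (graph_rel A)\<^sup>*"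
proof -
  obtain a where a: "a \<in> arcs C" "y = a \<or> y = sig C a \<or> y = sig C (sig C a)"
    using dart_cases[OF assms] by blast
  have "circ_proj a = sig C a" "circ_proj (sig C a) = sig C a"
    "circ_proj (sig C (sig C a)) = sig C (sig C a)" "sig C (sig C (sig C a)) = a"
    using a(1) sig_arc_notin_arcs sig2_arc_notin_arcs sig3 arcs_subset unfolding circ_proj_def
    by auto
  moreover have "(sig C a, sig C (sig C a)) \<in> graph_rel A"
    "(sig C (sig C a), sig C a) \<in> graph_rel A"
    using resolve_empty_edge[OF sig_arc_in_circ[OF a(1)]]
      resolve_empty_edge[OF sig2_arc_in_circ[OF a(1)]]
      resolve_sig_arc[OF a(1)] resolve_sig2_arc[OF a(1)] by simp_all
  ultimately show ?thesis
    using a(2) by auto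
qed

lemma circ_proj_alph_step:
  assumes "y \<in> darts C"
  shows "(circ_proj y, circ_proj (alph C y)) \<in> (graph_rel (arcs C))\<^sup>*"
proof (cases "y \<in> arcs C")
  case True
  then have "alph C y \<in> arcs C"
    by (rule alph_in_arcs)
  have "(sig C y, resolve (arcs C) (sig C y)) \<in> graph_rel (arcs C)"
    using True sig_arc_in_circ unfolding graph_rel_def res_rel_def by blast
  moreover have "(sig C (sig C (alph C y)), sig C (alph C y)) \<in> graph_rel (arcs C)"
    using resolve_empty_edge[OF sig2_arc_in_circ] resolve_sig2_arc \<open>alph C y \<in> arcs C\<close>
    by simp
  ultimately show ?thesis
    using True \<open>alph C y \<in> arcs C\<close> resolve_sig_arc[OF True] unfolding circ_proj_def
    by (simp add: converse_rtrancl_into_rtrancl)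
next
  case False
  then have "y \<in> circ" "alph C y \<in> circ"
    using assms alph_in_circ circ_eq by blast+
  then have "circ_proj y = y" "circ_proj (alph C y) = alph C y"
    unfolding circ_proj_def circ_eq by auto
  moreover have "(y, alph C y) \<in> graph_rel (arcs C)"
    unfolding graph_rel_def res_rel_def using \<open>y \<in> circ\<close> by blast
  ultimately show ?thesis
    by simp
qed

lemma circ_proj_connected:
  assumes "d \<in> darts C" "e \<in> darts C"
  shows "(circ_proj d, circ_proj e) \<in> (graph_rel (arcs C))\<^sup>*"
  using darts_connected[OF assms]
proof (induction rule: rtrancl_induct)
  case (step y z)
  then have "(circ_proj y, circ_proj z) \<in> (graph_rel (arcs C))\<^sup>*"
    using circ_proj_sig_step circ_proj_alph_step by blast
  with step.IH show ?case
    by (rule rtrancl_trans)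
qed simp

lemma circ_nonempty: "circ \<noteq> {}"
  using darts_nonempty circ_proj_def sig_arc_in_circ circ_eq by fastforce

lemma num_graph_comps_arcs: "num_graph_comps (arcs C) = 1"
proof -
  let ?K = "graph_rel (arcs C)"
  obtain x0 where "x0 \<in> circ"
    using circ_nonempty by blast
  have conn: "(x, y) \<in> ?K\<^sup>*" if "x \<in> circ" "y \<in> circ" for x y
    using circ_proj_connected[of x y] that circ_eq unfolding circ_proj_def by auto
  have "{y. (x, y) \<in> ?K\<^sup>*} = {y. (x0, y) \<in> ?K\<^sup>*}" if "x \<in> circ" for x
    using conn[OF that \<open>x0 \<in> circ\<close>] conn[OF \<open>x0 \<in> circ\<close> that]
    by (blast intro: rtrancl_trans)
  then have "(\<lambda>x. {y. (x, y) \<in> ?K\<^sup>*}) ` circ = {{y. (x0, y) \<in> ?K\<^sup>*}}"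
    using \<open>x0 \<in> circ\<close> by blast
  then show ?thesis
    unfolding num_graph_comps_def num_components_def by simp
qed

lemma card_starts_add_card_ends_le: "card (starts C) + card (ends C) \<le> dim C + 2"
  using num_res_circles_bound[OF arc_closed_arcs] num_graph_comps_arcs card_arcs_eq card_starts_eq
    card_ends_eq by simp

lemma card_starts_pos: "card (starts C) \<ge> 1"
  using finite_circ circ_nonempty unfolding starts_def by (simp add: Suc_le_eq card_gt_0_iff)

end

section \<open>The dual configuration\<close>

lemma dual_darts [simp]: "darts (dual C) = darts C"
  by (simp add: dual_def)

lemma dual_alph [simp]: "alph (dual C) = alph C"
  by (simp add: dual_def)

lemma dual_arcs [simp]: "arcs (dual C) = arcs C"
  by (simp add: dual_def)

lemma dual_circ_darts [simp]: "circ_darts (dual C) = circ_darts C"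
  by (simp add: circ_darts_def)

lemma dual_dim [simp]: "dim (dual C) = dim C"
  by (simp add: dim_def)

lemma sig_dual: "sig (dual C) d = (if d \<in> arcs C then sig C (sig C (alph C d))
    else if sig C (sig C d) \<in> arcs C then sig C (sig C d) else sig C (alph C (sig C d)))"
  by (simp add: dual_def)

context conn_conf
begin

definition dsig :: "'d \<Rightarrow> 'd" where
  "dsig = sig (dual C)"

lemma dsig_arc: "a \<in> arcs C \<Longrightarrow> dsig a = sig C (sig C (alph C a))"
  unfolding dsig_def sig_dual by simp

lemma dsig_sig_arc: "a \<in> arcs C \<Longrightarrow> dsig (sig C a) = a"
  unfolding dsig_def sig_dual using sig_arc_notin_arcs sig3 arcs_subset by auto

lemma dsig_sig2_arc: "a \<in> arcs C \<Longrightarrow> dsig (sig C (sig C a)) = sig C (alph C a)"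
  unfolding dsig_def sig_dual using sig2_arc_notin_arcs sig3 arcs_subset sig_arc_notin_arcs by auto

lemma dsig2_arc: "a \<in> arcs C \<Longrightarrow> dsig (dsig a) = sig C a"
  using dsig_arc dsig_sig2_arc alph_in_arcs alph_alph_arc by simp

lemma dsig3_arc: "a \<in> arcs C \<Longrightarrow> dsig (dsig (dsig a)) = a"
  using dsig2_arc dsig_sig_arc by simp

lemma dsig_alph_arc: "a \<in> arcs C \<Longrightarrow> dsig (alph C a) = sig C (sig C a)"
  using dsig_arc alph_in_arcs alph_alph_arc by simp

lemma dsig_arc_notin_arcs: "a \<in> arcs C \<Longrightarrow> dsig a \<notin> arcs C \<and> dsig (dsig a) \<notin> arcs C"
  using dsig_arc dsig2_arc alph_in_arcs sig_arc_notin_arcs sig2_arc_notin_arcs by simp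

lemma dual_vertex_cases: "d \<in> darts C \<Longrightarrow> \<exists>a\<in>arcs C. d = a \<or> d = dsig a \<or> d = dsig (dsig a)"
  using dart_cases[of d] dsig2_arc dsig_alph_arc alph_in_arcs by metis

lemma dual_vertex_eq:
  assumes "a \<in> arcs C" "d = a \<or> d = dsig a \<or> d = dsig (dsig a)"
  shows "{d, dsig d, dsig (dsig d)} = {a, dsig a, dsig (dsig a)}"
  using assms dsig3_arc by auto

lemma dsig_in_darts: "d \<in> darts C \<Longrightarrow> dsig d \<in> darts C"
proof -
  assume "d \<in> darts C"
  then obtain a where a: "a \<in> arcs C" "d = a \<or> d = dsig a \<or> d = dsig (dsig a)"
    using dual_vertex_cases by blast
  have "a \<in> darts C" "alph C a \<in> darts C"
    using a(1) alph_in_arcs arcs_subset by blast+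
  then have "dsig a \<in> darts C" "dsig (dsig a) \<in> darts C" "dsig (dsig (dsig a)) \<in> darts C"
    using dsig_arc[OF a(1)] dsig2_arc[OF a(1)] dsig3_arc[OF a(1)] sig_in_darts by simp_all
  then show ?thesis
    using a(2) by auto
qed

lemma dsig3: "d \<in> darts C \<Longrightarrow> dsig (dsig (dsig d)) = d"
  using dual_vertex_cases[of d] dsig3_arc by auto

lemma dsig_neq: "d \<in> darts C \<Longrightarrow> dsig d \<noteq> d"
proof
  assume "d \<in> darts C" "dsig d = d"
  then have "dsig (dsig (dsig d)) = dsig d" "dsig (dsig d) = d"
    by simp_all
  obtain a where a: "a \<in> arcs C" "d = a \<or> d = dsig a \<or> d = dsig (dsig a)"
    using dual_vertex_cases \<open>d \<in> darts C\<close> by blast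
  have "d \<in> arcs C"
    using a(2)
  proof (elim disjE)
    assume "d = dsig a"
    then show ?thesis
      using \<open>dsig (dsig d) = d\<close> dsig3_arc[OF a(1)] a(1) by simp
  next
    assume "d = dsig (dsig a)"
    then show ?thesis
      using \<open>dsig d = d\<close> dsig3_arc[OF a(1)] a(1) by simp
  qed (use a(1) in simp)
  then show False
    using dsig_arc_notin_arcs \<open>dsig d = d\<close> by metis
qed

lemma bij_dsig: "bij_betw dsig (darts C) (darts C)"
  by (rule bij_betw_byWitness[where f' = "\<lambda>d. dsig (dsig d)"]) (auto simp: dsig3 dsig_in_darts)

lemma dsig_vertex_one_arc: "d \<in> darts C \<Longrightarrow> card ({d, dsig d, dsig (dsig d)} \<inter> arcs C) = 1"
proof -
  assume "d \<in> darts C"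
  then obtain a where a: "a \<in> arcs C" "d = a \<or> d = dsig a \<or> d = dsig (dsig a)"
    using dual_vertex_cases by blast
  have "{a, dsig a, dsig (dsig a)} \<inter> arcs C = {a}"
    using a(1) dsig_arc_notin_arcs by auto
  then show ?thesis
    unfolding dual_vertex_eq[OF a] by simp
qed

lemma sig_edge_dual_connected:
  assumes "y \<in> darts C"
  shows "(y, sig C y) \<in> ({(x, alph C x) | x. x \<in> darts C} \<union> {(x, dsig x) | x. x \<in> darts C})\<^sup>*"
    (is "_ \<in> ?E\<^sup>*")
proof -
  obtain a where a: "a \<in> arcs C" "y = a \<or> y = sig C a \<or> y = sig C (sig C a)"
    using dart_cases[OF assms] by blast
  have a': "alph C a \<in> arcs C" "alph C (alph C a) = a"
    using a(1) alph_in_arcs alph_alph_arc by blast+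
  have darts: "a \<in> darts C" "alph C a \<in> darts C" "sig C a \<in> darts C" "sig C (sig C a) \<in> darts C"
    "sig C (alph C a) \<in> darts C"
    using a(1) a'(1) arcs_subset sig_in_darts by blast+
  have dsig_edge: "(x, dsig x) \<in> ?E" and alph_edge: "(x, alph C x) \<in> ?E" if "x \<in> darts C" for x
    using that by blast+
  have path3: "(x1, x4) \<in> ?E\<^sup>*" if "(x1, x2) \<in> ?E" "(x2, x3) \<in> ?E" "(x3, x4) \<in> ?E"
    for x1 x2 x3 x4
    using converse_rtrancl_into_rtrancl[OF that(1) converse_rtrancl_into_rtrancl[OF that(2)]]
      that(3)
    by blast
  show ?thesis
    using a(2)
  proof (elim disjE)
    assume "y = a"
    have "(a, dsig a) \<in> ?E" "(dsig a, dsig (dsig a)) \<in> ?E"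
      using dsig_edge darts(1) dsig_in_darts by blast+
    then have "(a, dsig (dsig a)) \<in> ?E\<^sup>*"
      by (meson converse_rtrancl_into_rtrancl r_into_rtrancl)
    then show ?thesis
      using \<open>y = a\<close> dsig2_arc[OF a(1)] by simp
  next
    assume "y = sig C a"
    have "(sig C a, a) \<in> ?E" "(a, alph C a) \<in> ?E" "(alph C a, sig C (sig C a)) \<in> ?E"
      using dsig_edge[OF darts(3)] alph_edge[OF darts(1)] dsig_edge[OF darts(2)]
        dsig_sig_arc[OF a(1)] dsig_alph_arc[OF a(1)] by simp_all
    then have "(sig C a, sig C (sig C a)) \<in> ?E\<^sup>*"
      by (rule path3)
    then show ?thesis
      using \<open>y = sig C a\<close> by simp
  next
    assume "y = sig C (sig C a)"
    have "(sig C (sig C a), sig C (alph C a)) \<in> ?E" "(sig C (alph C a), alph C a) \<in> ?E"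
      "(alph C a, a) \<in> ?E"
      using dsig_edge[OF darts(4)] dsig_edge[OF darts(5)] alph_edge[OF darts(2)]
        dsig_sig2_arc[OF a(1)] dsig_sig_arc[OF a'(1)] a'(2) by simp_all
    then have "(sig C (sig C a), a) \<in> ?E\<^sup>*"
      by (rule path3)
    moreover have "sig C (sig C (sig C a)) = a"
      using sig3 darts(1) by blast
    ultimately show ?thesis
      using \<open>y = sig C (sig C a)\<close> by simp
  qed
qed

lemma dsig_darts_connected:
  assumes "d \<in> darts C" "e \<in> darts C"
  shows "(d, e) \<in> ({(x, alph C x) | x. x \<in> darts C} \<union> {(x, dsig x) | x. x \<in> darts C})\<^sup>*"
proof -
  have "{(x, alph C x) | x. x \<in> darts C} \<union> {(x, sig C x) | x. x \<in> darts C}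
      \<subseteq> ({(x, alph C x) | x. x \<in> darts C} \<union> {(x, dsig x) | x. x \<in> darts C})\<^sup>*"
    using sig_edge_dual_connected by blast
  then show ?thesis
    using darts_connected[OF assms] rtrancl_subset_rtrancl by blast
qed

lemma card_vertices: "card {orbit (sig C) d | d. d \<in> darts C} = card (arcs C)"
  using sig3 arcs_subset sig_arc_notin_arcs sig2_arc_notin_arcs dart_cases
  by (intro card_orbits_period3) blast+

lemma card_dual_vertices: "card {orbit dsig d | d. d \<in> darts C} = card (arcs C)"
  using dsig3 arcs_subset dsig_arc_notin_arcs dual_vertex_cases
  by (intro card_orbits_period3) blast+

lemma bij_alph: "bij_betw (alph C) (darts C) (darts C)"
  by (rule bij_betw_byWitness[where f' = "alph C"]) (auto simp: alph_alph alph_in_darts)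

text \<open>A face of \<open>C\<close> and the corresponding face of its dual pass through the same circle darts
  in the same order; \<open>face_return\<close> is the first-return map of both face permutations to the
  circle darts, so the two configurations have equally many faces.\<close>

definition face_return :: "'d \<Rightarrow> 'd" where
  "face_return c = (if sig C (alph C c) \<in> circ then sig C (alph C c)
    else sig C (alph C (sig C (alph C c))))"

lemma card_faces:
  "card {orbit (sig C \<circ> alph C) d | d. d \<in> darts C} = card (orbit face_return ` circ)"
proof -
  have "card (orbit (sig C \<circ> alph C) ` darts C) = card (orbit face_return ` circ)"
  proof (rule card_orbits_first_return)
    show "bij_betw (sig C \<circ> alph C) (darts C) (darts C)"
      using bij_betw_trans[OF bij_alph bij_sig] .
    show "(sig C \<circ> alph C) x \<in> circ" if "x \<in> darts C - circ" for x
      using that sig_arc_in_circ alph_in_arcs circ_eq by auto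
  qed (auto simp: finite_darts circ_eq face_return_def)
  then show ?thesis
    by (simp add: Setcompr_eq_image)
qed

lemma face_return_dual:
  assumes "c \<in> circ"
  shows "face_return c = (if (dsig \<circ> alph C) c \<in> circ then (dsig \<circ> alph C) c
    else (dsig \<circ> alph C) ((dsig \<circ> alph C) c))"
proof -
  obtain b where b: "b \<in> arcs C" "alph C c = sig C b \<or> alph C c = sig C (sig C b)"
    using assms alph_in_circ circ_cases by blast
  have b': "alph C b \<in> arcs C" "alph C (alph C b) = b" "b \<notin> circ"
    using b(1) alph_in_arcs alph_alph_arc circ_eq by blast+
  show ?thesis
    using b(2)
  proof
    assume "alph C c = sig C b"
    then show ?thesis
      unfolding face_return_def
      using sig2_arc_in_circ[OF b(1)] dsig_sig_arc[OF b(1)] dsig_arc[OF b'(1)] b' by simp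
  next
    assume "alph C c = sig C (sig C b)"
    moreover have "sig C (sig C (sig C b)) = b"
      using sig3 b(1) arcs_subset by blast
    ultimately show ?thesis
      unfolding face_return_def using b' dsig_sig2_arc[OF b(1)] sig_arc_in_circ[OF b'(1)] by simp
  qed
qed

lemma card_dual_faces:
  "card {orbit (dsig \<circ> alph C) d | d. d \<in> darts C} = card (orbit face_return ` circ)"
proof -
  have "card (orbit (dsig \<circ> alph C) ` darts C) = card (orbit face_return ` circ)"
  proof (rule card_orbits_first_return)
    show "bij_betw (dsig \<circ> alph C) (darts C) (darts C)"
      using bij_betw_trans[OF bij_alph bij_dsig] .
    show "(dsig \<circ> alph C) x \<in> circ" if "x \<in> darts C - circ" for x
      using that dsig_alph_arc sig2_arc_in_circ circ_eq by auto
  qed (auto simp: finite_darts circ_eq face_return_dual)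
  then show ?thesis
    by (simp add: Setcompr_eq_image)
qed

lemma conn_config_dual: "conn_config (dual C)"
proof -
  have "int (card {orbit dsig d | d. d \<in> darts C}) - int (card {{d, alph C d} | d. d \<in> darts C})
      + int (card {orbit (dsig \<circ> alph C) d | d. d \<in> darts C}) = 2"
    using euler_formula card_vertices card_dual_vertices card_faces card_dual_faces by simp
  then show ?thesis
    unfolding conn_config_def dual_darts dual_alph dual_arcs dsig_def[symmetric]
    by (intro conjI ballI)
      (simp_all add: finite_darts darts_nonempty alph_in_darts alph_neq alph_alph bij_dsig dsig3
        dsig_neq arcs_subset alph_in_arcs dsig_vertex_one_arc dsig_darts_connected)
qed

lemma other_dual: "x \<in> circ \<Longrightarrow> other (dual C) x = surg C x"
proof -
  assume "x \<in> circ"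
  then obtain a where a: "a \<in> arcs C" "x = sig C a \<or> x = sig C (sig C a)"
    using circ_cases by blast
  have "other (dual C) x = (if dsig x \<in> arcs C then dsig (dsig x) else dsig x)"
    unfolding other_def dsig_def by simp
  then show ?thesis
    using a dsig_sig_arc[OF a(1)] dsig_arc[OF a(1)] surg_sig_arc[OF a(1)] dsig_sig2_arc[OF a(1)]
      surg_sig2_arc[OF a(1)] sig_arc_notin_arcs[OF alph_in_arcs[OF a(1)]] by auto
qed

lemma surg_dual: "x \<in> circ \<Longrightarrow> surg (dual C) x = other C x"
proof -
  assume "x \<in> circ"
  then obtain a where a: "a \<in> arcs C" "x = sig C a \<or> x = sig C (sig C a)"
    using circ_cases by blast
  have a': "alph C a \<in> arcs C" "alph C (alph C a) = a"
    using a(1) alph_in_arcs alph_alph_arc by blast+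
  have surg_dual_eq: "surg (dual C) x = (if dsig (dsig x) \<in> arcs C
      then dsig (dsig (alph C (dsig (dsig x)))) else dsig (alph C (dsig x)))"
    unfolding surg_def dsig_def by simp
  show ?thesis
    using a(2)
  proof
    assume "x = sig C a"
    then show ?thesis
      using surg_dual_eq dsig_sig_arc[OF a(1)] dsig_arc[OF a(1)] dsig_arc[OF a'(1)] a'(2)
        other_sig_arc[OF a(1)] sig2_arc_notin_arcs[OF a'(1)] by simp
  next
    assume "x = sig C (sig C a)"
    then show ?thesis
      using surg_dual_eq dsig_sig2_arc[OF a(1)] dsig_sig_arc[OF a'(1)] a' dsig_arc[OF a(1)]
        dsig_sig2_arc[OF a'(1)] other_sig2_arc[OF a(1)] by simp
  qed
qed

lemma starts_dual: "starts (dual C) = ends C"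
proof -
  have "{(x, other (dual C) x) | x. x \<in> circ} = {(x, surg C x) | x. x \<in> circ}"
    unfolding Setcompr_eq_image by (intro image_cong) (auto simp: other_dual)
  then show ?thesis
    unfolding starts_def ends_def start_circ_def end_circ_def by simp
qed

lemma ends_dual: "ends (dual C) = starts C"
proof -
  have "{(x, surg (dual C) x) | x. x \<in> circ} = {(x, other C x) | x. x \<in> circ}"
    unfolding Setcompr_eq_image by (intro image_cong) (auto simp: surg_dual)
  then show ?thesis
    unfolding starts_def ends_def start_circ_def end_circ_def by simp
qed

text \<open>Dualizing twice turns every arc by a half turn, which exchanges its two halves.\<close>

definition swap_arcs :: "'d \<Rightarrow> 'd" where
  "swap_arcs d = (if d \<in> arcs C then alph C d else d)"

lemma swap_arcs_sig_dual_dual: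
  assumes "d \<in> darts C"
  shows "swap_arcs (sig (dual (dual C)) d) = sig C (swap_arcs d)"
proof -
  have sig_dd: "sig (dual (dual C)) d = (if d \<in> arcs C then dsig (dsig (alph C d))
      else if dsig (dsig d) \<in> arcs C then dsig (dsig d) else dsig (alph C (dsig d)))"
    unfolding sig_dual[of "dual C"] dsig_def by simp
  obtain a where a: "a \<in> arcs C" "d = a \<or> d = sig C a \<or> d = sig C (sig C a)"
    using dart_cases assms by blast
  have a': "alph C a \<in> arcs C" "alph C (alph C a) = a"
    using a(1) alph_in_arcs alph_alph_arc by blast+
  have not_arcs: "sig C a \<notin> arcs C" "sig C (sig C a) \<notin> arcs C" "sig C (alph C a) \<notin> arcs C"
    "sig C (sig C (alph C a)) \<notin> arcs C"
    using sig_arc_notin_arcs sig2_arc_notin_arcs a(1) a'(1) by auto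
  show ?thesis
    using a(2)
  proof (elim disjE)
    assume "d = a"
    then show ?thesis
      unfolding swap_arcs_def sig_dd using a(1) a' dsig2_arc not_arcs by simp
  next
    assume "d = sig C a"
    then show ?thesis
      unfolding swap_arcs_def sig_dd
      using dsig_sig_arc[OF a(1)] dsig_arc[OF a(1)] dsig_alph_arc[OF a(1)] not_arcs by simp
  next
    assume "d = sig C (sig C a)"
    moreover have "sig C (sig C (sig C a)) = a"
      using sig3 a(1) arcs_subset by blast
    ultimately show ?thesis
      unfolding swap_arcs_def sig_dd
      using dsig_sig2_arc[OF a(1)] dsig_sig_arc[OF a'(1)] a' not_arcs by simp
  qed
qed

lemma conf_iso_dual_dual: "conf_iso swap_arcs (dual (dual C)) C"
proof -
  have alph_arcs_iff: "alph C d \<in> arcs C \<longleftrightarrow> d \<in> arcs C" if "d \<in> darts C" for d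
    using that alph_in_arcs alph_alph by metis
  have "bij_betw swap_arcs (darts C) (darts C)"
    by (rule bij_betw_byWitness[where f' = swap_arcs])
      (auto simp: swap_arcs_def alph_in_darts alph_in_arcs alph_alph_arc)
  moreover have "swap_arcs (alph C d) = alph C (swap_arcs d)" "d \<in> arcs C \<longleftrightarrow> swap_arcs d \<in> arcs C"
    if "d \<in> darts C" for d
    using that alph_arcs_iff[OF that] alph_alph alph_in_arcs unfolding swap_arcs_def by auto
  ultimately show ?thesis
    unfolding conf_iso_def using swap_arcs_sig_dual_dual by simp
qed

lemma is_dual_tree_if_card:
  assumes "card (ends C) = dim C + 1" and "card (starts C) = 1"
  shows "is_dual_tree C"
proof -
  have "is_tree (dual C)"
    unfolding is_tree_def using conn_config_dual starts_dual ends_dual assms by simp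
  then show ?thesis
    unfolding is_dual_tree_def using conf_iso_dual_dual by blast
qed

end

section \<open>Vanishing of the maps\<close>

context conn_conf
begin

lemma finite_starts: "finite (starts C)"
  unfolding starts_def using finite_circ by simp

lemma finite_ends: "finite (ends C)"
  unfolding ends_def using finite_circ by simp

lemma is_dual_tree_if_gr_empty:
  assumes "gr0 C {} + 2 * int (dim C) \<le> gr1 C b"
  shows "is_dual_tree C"
proof -
  have "int (card (starts C)) + int (dim C) \<le> int (card (ends C))"
    using assms unfolding gr0_def gr1_def by simp
  then have "card (starts C) = 1" "card (ends C) = dim C + 1"
    using card_starts_add_card_ends_le card_starts_pos by linarith+
  then show ?thesis
    by (intro is_dual_tree_if_card)
qed

lemma is_tree_if_gr_filtered:
  assumes a: "a \<subseteq> starts C" "a \<noteq> {}" and b: "b \<subseteq> ends C"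
    and filt: "\<And>d. d \<in> circ \<Longrightarrow> start_circ C d \<in> a \<Longrightarrow> end_circ C d \<in> b"
    and gr: "gr0 C a + 2 * int (dim C) \<le> gr1 C b"
  shows "is_tree C"
proof -
  have "b \<noteq> {}"
    using a filt unfolding starts_def by blast
  then have "card b \<ge> 1"
    using b finite_ends by (meson card_0_eq finite_subset less_one not_le)
  moreover have "card a \<le> card (starts C)"
    using a finite_starts by (simp add: card_mono)
  ultimately have "card a = card (starts C)" "card b = 1"
    "card (starts C) + card (ends C) = dim C + 2"
    using gr card_starts_add_card_ends_le unfolding gr0_def gr1_def by linarith+
  then have "a = starts C"
    using a finite_starts card_subset_eq by blast
  then have "ends C \<subseteq> b"
    using filt unfolding starts_def ends_def by blast
  then have "card (ends C) = 1"
    using b \<open>card b = 1\<close> by auto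
  then show ?thesis
    unfolding is_tree_def using conn_config \<open>card (starts C) + card (ends C) = dim C + 2\<close>
    by simp
qed

end

theorem theorem3p4:
  fixes F :: "'d family" and C :: "'d rconf" and p :: int
  assumes "naturality_rule F" and "duality_rule F" and "filtration_rule F"
    and "conn_config C" and "\<not> is_tree C" and "\<not> is_dual_tree C"
    and "has_bidegree F C p" and "p \<ge> 2 * int (dim C)"
  shows "\<forall>a b. a \<subseteq> starts C \<longrightarrow> b \<subseteq> ends C \<longrightarrow> F C a b = 0"
proof (intro allI impI)
  interpret conn_conf C
    using assms(4) by unfold_locales
  fix a b
  assume a: "a \<subseteq> starts C" and b: "b \<subseteq> ends C"
  show "F C a b = 0"
  proof (rule ccontr)
    assume nz: "F C a b \<noteq> 0"
    then have "gr0 C a + 2 * int (dim C) \<le> gr1 C b"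
      using assms(7,8) a b unfolding has_bidegree_def by fastforce
    moreover have "end_circ C d \<in> b" if "d \<in> circ" "start_circ C d \<in> a" for d
      using assms(3,4) a b nz that unfolding filtration_rule_def by blast
    ultimately show False
      using assms(5,6) a b is_dual_tree_if_gr_empty is_tree_if_gr_filtered by (cases "a = {}") auto
  qed
qed

end
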